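(* Let $R$ be a ring, $*\in\{l,r,\emptyset\}$, $\mathfrak{a}\in\mathrm{ass}\,\mathbb{L}_*(R)$, and $\pi:R\to\overline{R}:=R/\mathfrak{a}$, $r\mapsto\overline{r}=r+\mathfrak{a}$. Then \begin{enumerate} \item $T_{*,\mathfrak{a}}(R)=\pi^{-1}(S_*(\overline{R}))$; \item $\mathbb{Q}_{*,\mathfrak{a}}(R)\simeq Q_*(\overline{R})$, an $R$-isomorphism; \item $T_{*,\mathfrak{a}}(R)=\sigma^{-1}(\mathbb{Q}_{*,\mathfrak{a}}(R)^\times)=\sigma^{-1}(Q_*(\overline{R})^\times)$, where $\sigma:R\to\mathbb{Q}_{*,\mathfrak{a}}(R)\simeq Q_*(\overline{R})$, $r\mapsto\frac r1$. \end{enumerate}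
   Context: Rings are associative with $1$. Multiplicative set: $SS\subseteq S$, $1\in S$, $0\notin S$. $R\langle S^{-1}\rangle=R\langle X_S\rangle/I_S$ ($R\langle X_S\rangle$ freely generated by $R$ and noncommuting $x_s$, $s\in S$; $I_S$ generated by $sx_s-1,x_ss-1$); $\mathrm{ass}_R(S)=\ker(R\to R\langle S^{-1}\rangle)$. $S$ is left (resp. right) localizable if $R\langle S^{-1}\rangle\ne0$ and every element has the form $(x_s+I_S)(r+I_S)$ (resp. $(r+I_S)(x_s+I_S)$); localizable if both; $\mathbb{L}_*(R)$ is the set of $*$-localizable sets ($l$: left, $r$: right, $\emptyset$: both), $\mathbb{L}_*(R,\mathfrak{a})=\{S\in\mathbb{L}_*(R):\mathrm{ass}_R(S)=\mathfrak{a}\}$ and $\mathrm{ass}\,\mathbb{L}_*(R)=\{\mathrm{ass}_R(S):S\in\mathbb{L}_*(R)\}$. $T_{*,\mathfrak{a}}(R):=\bigcup_{S\in\mathbb{L}_*(R,\mathfrak{a})}S$; it is the largest element of $\mathbb{L}_*(R,\mathfrak{a})$, and $\mathbb{Q}_{*,\mathfrak{a}}(R):=R\langle T_{*,\mathfrak{a}}(R)^{-1}\rangle$. For a ring $A$, a regular left (right) Ore set is a multiplicative set $T$ of regular elements with $Ta\cap At\ne\emptyset$ (resp. $aT\cap tA\neq\emptyset$) for all $a\in A,t\in T$; there is a largest regular left Ore set $S_l(A)$, a largest regular right Ore set $S_r(A)$ and a largest regular (two-sided) Ore set $S_\emptyset(A)=S(A)$; $Q_l(A)=S_l(A)^{-1}A$,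 $Q_r(A)=AS_r(A)^{-1}$, $Q_\emptyset(A)=S(A)^{-1}A$. $Q^\times$ is the unit group. *)

theory Defs
  imports "HOL-Algebra.QuotRing"
begin

definition mult_set :: "('a, 'm) ring_scheme \<Rightarrow> 'a set \<Rightarrow> bool" where
  "mult_set R S \<longleftrightarrow> S \<subseteq> carrier R \<and> \<one>\<^bsub>R\<^esub> \<in> S \<and> \<zero>\<^bsub>R\<^esub> \<notin> S \<and>
     (\<forall>a\<in>S. \<forall>b\<in>S. a \<otimes>\<^bsub>R\<^esub> b \<in> S)"

text \<open>The free ring on the alphabet (elements of R) + (variables x_s, s in S):
  finitely supported integer-valued functions on words, with convolution product
  along concatenation.  Inl r is the letter r, Inr s is the variable x_s.\<close>

definition fr_carrier :: "'a set \<Rightarrow> 'a set \<Rightarrow> (('a + 'a) list \<Rightarrow> int) set" where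
  "fr_carrier A S = {f. finite {w. f w \<noteq> 0} \<and>
      (\<forall>w. f w \<noteq> 0 \<longrightarrow> set w \<subseteq> Inl ` A \<union> Inr ` S)}"

definition free_ring :: "'a set \<Rightarrow> 'a set \<Rightarrow> (('a + 'a) list \<Rightarrow> int) ring" where
  "free_ring A S = \<lparr> carrier = fr_carrier A S,
      mult = (\<lambda>f g w. \<Sum>i\<le>length w. f (take i w) * g (drop i w)),
      one = (\<lambda>w. if w = [] then 1 else 0),
      zero = (\<lambda>w. 0),
      add = (\<lambda>f g w. f w + g w) \<rparr>"

definition mon :: "('a + 'a) list \<Rightarrow> (('a + 'a) list \<Rightarrow> int)" where
  "mon u = (\<lambda>w. if w = u then 1 else 0)"

text \<open>Relations: the letters of R multiply and add as in R (so that R embeds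
  as a subring-image and R<X_S> is the ring freely generated by R and the x_s),
  and s x_s = 1 = x_s s for s in S.\<close>

definition loc_rels :: "('a, 'm) ring_scheme \<Rightarrow> 'a set \<Rightarrow> (('a + 'a) list \<Rightarrow> int) set" where
  "loc_rels R S =
     {(\<lambda>w. mon [Inl (a \<oplus>\<^bsub>R\<^esub> b)] w - mon [Inl a] w - mon [Inl b] w) | a b.
         a \<in> carrier R \<and> b \<in> carrier R}
   \<union> {(\<lambda>w. mon [Inl (a \<otimes>\<^bsub>R\<^esub> b)] w - mon [Inl a, Inl b] w) | a b.
         a \<in> carrier R \<and> b \<in> carrier R}
   \<union> {(\<lambda>w. mon [Inl \<one>\<^bsub>R\<^esub>] w - mon [] w)}
   \<union> {(\<lambda>w. mon [Inl s, Inr s] w - mon [] w) | s. s \<in> S}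
   \<union> {(\<lambda>w. mon [Inr s, Inl s] w - mon [] w) | s. s \<in> S}"

definition loc_ideal :: "('a, 'm) ring_scheme \<Rightarrow> 'a set \<Rightarrow> (('a + 'a) list \<Rightarrow> int) set" where
  "loc_ideal R S = genideal (free_ring (carrier R) S) (loc_rels R S)"

definition loc :: "('a, 'm) ring_scheme \<Rightarrow> 'a set \<Rightarrow> (('a + 'a) list \<Rightarrow> int) set ring" where
  "loc R S = free_ring (carrier R) S Quot loc_ideal R S"

definition loc_map :: "('a, 'm) ring_scheme \<Rightarrow> 'a set \<Rightarrow> 'a \<Rightarrow> (('a + 'a) list \<Rightarrow> int) set" where
  "loc_map R S r = loc_ideal R S +>\<^bsub>free_ring (carrier R) S\<^esub> mon [Inl r]"

definition loc_var :: "('a, 'm) ring_scheme \<Rightarrow> 'a set \<Rightarrow> 'a \<Rightarrow> (('a + 'a) list \<Rightarrow> int) set" where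
  "loc_var R S s = loc_ideal R S +>\<^bsub>free_ring (carrier R) S\<^esub> mon [Inr s]"

definition ass :: "('a, 'm) ring_scheme \<Rightarrow> 'a set \<Rightarrow> 'a set" where
  "ass R S = {r \<in> carrier R. loc_map R S r = \<zero>\<^bsub>loc R S\<^esub>}"

datatype side = Lft | Rgt | Two

definition left_localizable :: "('a, 'm) ring_scheme \<Rightarrow> 'a set \<Rightarrow> bool" where
  "left_localizable R S \<longleftrightarrow> mult_set R S \<and> \<one>\<^bsub>loc R S\<^esub> \<noteq> \<zero>\<^bsub>loc R S\<^esub> \<and>
     (\<forall>q\<in>carrier (loc R S). \<exists>s\<in>S. \<exists>r\<in>carrier R.
        q = loc_var R S s \<otimes>\<^bsub>loc R S\<^esub> loc_map R S r)"

definition right_localizable :: "('a, 'm) ring_scheme \<Rightarrow> 'a set \<Rightarrow> bool" where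
  "right_localizable R S \<longleftrightarrow> mult_set R S \<and> \<one>\<^bsub>loc R S\<^esub> \<noteq> \<zero>\<^bsub>loc R S\<^esub> \<and>
     (\<forall>q\<in>carrier (loc R S). \<exists>s\<in>S. \<exists>r\<in>carrier R.
        q = loc_map R S r \<otimes>\<^bsub>loc R S\<^esub> loc_var R S s)"

fun localizable :: "side \<Rightarrow> ('a, 'm) ring_scheme \<Rightarrow> 'a set \<Rightarrow> bool" where
  "localizable Lft R S = left_localizable R S"
| "localizable Rgt R S = right_localizable R S"
| "localizable Two R S = (left_localizable R S \<and> right_localizable R S)"

definition ass_L :: "side \<Rightarrow> ('a, 'm) ring_scheme \<Rightarrow> 'a set set" where
  "ass_L t R = {ass R S | S. localizable t R S}"

definition L_ass :: "side \<Rightarrow> ('a, 'm) ring_scheme \<Rightarrow> 'a set \<Rightarrow> 'a set set" where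
  "L_ass t R \<aa> = {S. localizable t R S \<and> ass R S = \<aa>}"

definition T_ass :: "side \<Rightarrow> ('a, 'm) ring_scheme \<Rightarrow> 'a set \<Rightarrow> 'a set" where
  "T_ass t R \<aa> = \<Union> (L_ass t R \<aa>)"

definition Q_ass :: "side \<Rightarrow> ('a, 'm) ring_scheme \<Rightarrow> 'a set \<Rightarrow> (('a + 'a) list \<Rightarrow> int) set ring" where
  "Q_ass t R \<aa> = loc R (T_ass t R \<aa>)"

definition regular :: "('a, 'm) ring_scheme \<Rightarrow> 'a \<Rightarrow> bool" where
  "regular A t \<longleftrightarrow> t \<in> carrier A \<and>
     (\<forall>a\<in>carrier A. t \<otimes>\<^bsub>A\<^esub> a = \<zero>\<^bsub>A\<^esub> \<longrightarrow> a = \<zero>\<^bsub>A\<^esub>) \<and>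
     (\<forall>a\<in>carrier A. a \<otimes>\<^bsub>A\<^esub> t = \<zero>\<^bsub>A\<^esub> \<longrightarrow> a = \<zero>\<^bsub>A\<^esub>)"

definition reg_left_Ore :: "('a, 'm) ring_scheme \<Rightarrow> 'a set \<Rightarrow> bool" where
  "reg_left_Ore A T \<longleftrightarrow> mult_set A T \<and> (\<forall>t\<in>T. regular A t) \<and>
     (\<forall>a\<in>carrier A. \<forall>t\<in>T. \<exists>t'\<in>T. \<exists>a'\<in>carrier A. t' \<otimes>\<^bsub>A\<^esub> a = a' \<otimes>\<^bsub>A\<^esub> t)"

definition reg_right_Ore :: "('a, 'm) ring_scheme \<Rightarrow> 'a set \<Rightarrow> bool" where
  "reg_right_Ore A T \<longleftrightarrow> mult_set A T \<and> (\<forall>t\<in>T. regular A t) \<and>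
     (\<forall>a\<in>carrier A. \<forall>t\<in>T. \<exists>t'\<in>T. \<exists>a'\<in>carrier A. a \<otimes>\<^bsub>A\<^esub> t' = t \<otimes>\<^bsub>A\<^esub> a')"

fun reg_Ore :: "side \<Rightarrow> ('a, 'm) ring_scheme \<Rightarrow> 'a set \<Rightarrow> bool" where
  "reg_Ore Lft A T = reg_left_Ore A T"
| "reg_Ore Rgt A T = reg_right_Ore A T"
| "reg_Ore Two A T = (reg_left_Ore A T \<and> reg_right_Ore A T)"

definition S_Ore :: "side \<Rightarrow> ('a, 'm) ring_scheme \<Rightarrow> 'a set" where
  "S_Ore t A = \<Union> {T. reg_Ore t A T}"

text \<open>This determines Q up to
  unique A-isomorphism.  For the two-sided case Q_\<emptyset>(A) = S(A)^{-1}A.\<close>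

definition is_left_fractions ::
  "('a, 'm) ring_scheme \<Rightarrow> 'a set \<Rightarrow> ('q, 'n) ring_scheme \<Rightarrow> ('a \<Rightarrow> 'q) \<Rightarrow> bool" where
  "is_left_fractions A T Q \<iota> \<longleftrightarrow> ring Q \<and> \<iota> \<in> ring_hom A Q \<and>
     (\<forall>t\<in>T. \<iota> t \<in> Units Q) \<and>
     (\<forall>q\<in>carrier Q. \<exists>t\<in>T. \<exists>a\<in>carrier A. q = inv\<^bsub>Q\<^esub> (\<iota> t) \<otimes>\<^bsub>Q\<^esub> \<iota> a) \<and>
     (\<forall>a\<in>carrier A. \<iota> a = \<zero>\<^bsub>Q\<^esub> \<longleftrightarrow> (\<exists>t\<in>T. t \<otimes>\<^bsub>A\<^esub> a = \<zero>\<^bsub>A\<^esub>))"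

definition is_right_fractions ::
  "('a, 'm) ring_scheme \<Rightarrow> 'a set \<Rightarrow> ('q, 'n) ring_scheme \<Rightarrow> ('a \<Rightarrow> 'q) \<Rightarrow> bool" where
  "is_right_fractions A T Q \<iota> \<longleftrightarrow> ring Q \<and> \<iota> \<in> ring_hom A Q \<and>
     (\<forall>t\<in>T. \<iota> t \<in> Units Q) \<and>
     (\<forall>q\<in>carrier Q. \<exists>t\<in>T. \<exists>a\<in>carrier A. q = \<iota> a \<otimes>\<^bsub>Q\<^esub> inv\<^bsub>Q\<^esub> (\<iota> t)) \<and>
     (\<forall>a\<in>carrier A. \<iota> a = \<zero>\<^bsub>Q\<^esub> \<longleftrightarrow> (\<exists>t\<in>T. a \<otimes>\<^bsub>A\<^esub> t = \<zero>\<^bsub>A\<^esub>))"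

fun is_Q :: "side \<Rightarrow> ('a, 'm) ring_scheme \<Rightarrow> ('q, 'n) ring_scheme \<Rightarrow> ('a \<Rightarrow> 'q) \<Rightarrow> bool" where
  "is_Q Lft A Q \<iota> = is_left_fractions A (S_Ore Lft A) Q \<iota>"
| "is_Q Rgt A Q \<iota> = is_right_fractions A (S_Ore Rgt A) Q \<iota>"
| "is_Q Two A Q \<iota> = is_left_fractions A (S_Ore Two A) Q \<iota>"

end

(*
  Fix a *-localizable S0 with ass(S0) = a, let pi : R -> A = R/a be the projection and
  (Q, iota) the ring of fractions Q_*(A).  Put T = pi^-1(S_*(A)).

  If S is *-localizable, then R/ass(S) embeds into R<S^-1>, and R<S^-1> consists of one-sided
  fractions over the image of S; pulled back along this embedding, the image of S in R/ass(S)
  is a regular *-Ore set.  Hence every S with ass(S) = a lies in T.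

  Conversely, the existence of Q_*(A) forces S_*(A) to be the preimage of the units of Q, so
  T is the preimage of the units of Q under iota o pi.  By the universal property of
  R<T^-1>, iota o pi extends to phi : R<T^-1> -> Q.  The Ore condition of S_*(A) lifts to an
  Ore condition on T modulo a, so R<T^-1> again consists of one-sided fractions.  Since
  S0 <= T, we get a = ass(S0) <= ass(T), while phi shows ass(T) <= a; with ass(T) = a both
  maps R -> R<T^-1> and iota o pi have kernel a, which makes phi injective, and phi is
  surjective because Q consists of fractions over S_*(A).  So T is *-localizable with
  ass(T) = a, i.e. T = T_{*,a}(R), and phi is the required isomorphism; it identifies the
  units of R<T^-1> and of Q, which gives the last two descriptions of T.
*)

theory Submission
  imports Defs
begin

section \<open>The free ring\<close>

definition conv :: "('b list \<Rightarrow> int) \<Rightarrow> ('b list \<Rightarrow> int) \<Rightarrow> 'b list \<Rightarrow> int" where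
  "conv f g = (\<lambda>w. \<Sum>i\<le>length w. f (take i w) * g (drop i w))"

definition supp :: "('b \<Rightarrow> int) \<Rightarrow> 'b set" where
  "supp f = {w. f w \<noteq> 0}"

lemma free_ring_simps:
  "carrier (free_ring A S) = fr_carrier A S"
  "mult (free_ring A S) = conv"
  "one (free_ring A S) = mon []"
  "zero (free_ring A S) = (\<lambda>w. 0)"
  "add (free_ring A S) = (\<lambda>f g w. f w + g w)"
  by (auto simp: free_ring_def conv_def mon_def fun_eq_iff)

lemma supp_mon: "supp (mon u) = {u}"
  by (auto simp: supp_def mon_def)

lemma conv_mon: "conv (mon u) (mon v) = mon (u @ v)"
proof (rule ext)
  fix w
  have split_iff: "(take i w = u \<and> drop i w = v) \<longleftrightarrow> (i = length u \<and> w = u @ v)"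
    if "i \<le> length w" for i
    using that by (metis append_eq_conv_conj length_take min.absorb2)
  have "conv (mon u) (mon v) w = (\<Sum>i\<le>length w. if i = length u \<and> w = u @ v then 1 else 0)"
    unfolding conv_def mon_def by (rule sum.cong) (use split_iff in auto)
  also have "\<dots> = mon (u @ v) w"
    by (cases "w = u @ v") (auto simp: mon_def)
  finally show "conv (mon u) (mon v) w = mon (u @ v) w" .
qed

lemma conv_sum_left: "conv (\<lambda>w. \<Sum>a\<in>F. G a w) g = (\<lambda>w. \<Sum>a\<in>F. conv (G a) g w)"
  unfolding conv_def by (simp add: sum_distrib_right sum.swap[of _ F])

lemma conv_sum_right: "conv g (\<lambda>w. \<Sum>a\<in>F. G a w) = (\<lambda>w. \<Sum>a\<in>F. conv g (G a) w)"
  unfolding conv_def by (simp add: sum_distrib_left sum.swap[of _ F])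

lemma conv_scale_left: "conv (\<lambda>w. c * f w) g = (\<lambda>w. c * conv f g w)"
  by (simp add: conv_def sum_distrib_left mult.assoc)

lemma conv_scale_right: "conv f (\<lambda>w. c * g w) = (\<lambda>w. c * conv f g w)"
  by (simp add: conv_def sum_distrib_left mult.left_commute)

lemma conv_add_left: "conv (\<lambda>w. f w + g w) h = (\<lambda>w. conv f h w + conv g h w)"
  by (simp add: conv_def sum.distrib distrib_right)

lemma conv_add_right: "conv h (\<lambda>w. f w + g w) = (\<lambda>w. conv h f w + conv h g w)"
  by (simp add: conv_def sum.distrib distrib_left)

lemma sum_supp_mon: "finite (supp f) \<Longrightarrow> (\<lambda>w. \<Sum>u\<in>supp f. f u * mon u w) = f"
proof (rule ext)
  fix w
  assume "finite (supp f)"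
  have "(\<Sum>u\<in>supp f. f u * mon u w) = (\<Sum>u\<in>supp f. if u = w then f u else 0)"
    by (rule sum.cong) (auto simp: mon_def)
  also have "\<dots> = f w" using \<open>finite (supp f)\<close> by (simp add: sum.delta' supp_def)
  finally show "(\<Sum>u\<in>supp f. f u * mon u w) = f w" .
qed

lemma conv_assoc:
  fixes f g h :: "('a + 'a) list \<Rightarrow> int"
  assumes "finite (supp f)" "finite (supp g)" "finite (supp h)"
  shows "conv (conv f g) h = conv f (conv g h)"
proof -
  have "conv (conv (\<lambda>w. \<Sum>u\<in>supp f. f u * mon u w) (\<lambda>w. \<Sum>v\<in>supp g. g v * mon v w))
          (\<lambda>w. \<Sum>x\<in>supp h. h x * mon x w)
      = conv (\<lambda>w. \<Sum>u\<in>supp f. f u * mon u w)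
          (conv (\<lambda>w. \<Sum>v\<in>supp g. g v * mon v w) (\<lambda>w. \<Sum>x\<in>supp h. h x * mon x w))"
    by (simp add: conv_sum_left conv_sum_right conv_scale_left conv_scale_right conv_mon
        sum_distrib_left sum_distrib_right mult.assoc)
  then show ?thesis by (simp only: sum_supp_mon assms)
qed

lemma conv_one_left: "conv (mon []) f = f"
proof (rule ext)
  fix w
  have "conv (mon []) f w = (\<Sum>i\<le>length w. if i = 0 then f w else 0)"
    unfolding conv_def mon_def by (rule sum.cong) auto
  then show "conv (mon []) f w = f w" by simp
qed

lemma conv_one_right: "conv f (mon []) = f"
proof (rule ext)
  fix w
  have "conv f (mon []) w = (\<Sum>i\<le>length w. if i = length w then f w else 0)"
    unfolding conv_def mon_def by (rule sum.cong) auto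
  then show "conv f (mon []) w = f w" by simp
qed

lemma supp_conv: "supp (conv f g) \<subseteq> (\<lambda>(u, v). u @ v) ` (supp f \<times> supp g)"
proof
  fix w assume "w \<in> supp (conv f g)"
  then have "(\<Sum>i\<le>length w. f (take i w) * g (drop i w)) \<noteq> 0" by (simp add: supp_def conv_def)
  then obtain i where "f (take i w) * g (drop i w) \<noteq> 0"
    by (meson sum.not_neutral_contains_not_neutral)
  then have "(take i w, drop i w) \<in> supp f \<times> supp g" by (simp add: supp_def)
  then show "w \<in> (\<lambda>(u, v). u @ v) ` (supp f \<times> supp g)"
    by (metis (no_types, lifting) append_take_drop_id case_prod_conv image_eqI)
qed

lemma supp_sum_subset: "supp (\<lambda>w. \<Sum>a\<in>F. G a w) \<subseteq> (\<Union>a\<in>F. supp (G a))"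
proof
  fix w assume "w \<in> supp (\<lambda>w. \<Sum>a\<in>F. G a w)"
  then have "(\<Sum>a\<in>F. G a w) \<noteq> 0" by (simp add: supp_def)
  then obtain a where "a \<in> F" "G a w \<noteq> 0" by (meson sum.not_neutral_contains_not_neutral)
  then show "w \<in> (\<Union>a\<in>F. supp (G a))" by (auto simp: supp_def)
qed

lemma finite_supp_sum_mon:
  assumes "finite F"
  shows "finite (supp (\<lambda>w. \<Sum>a\<in>F. c a * mon (p a) w))"
proof (rule finite_subset[OF supp_sum_subset])
  have "supp (\<lambda>w. c a * mon (p a) w) \<subseteq> {p a}" for a
    by (auto simp: supp_def mon_def)
  then show "finite (\<Union>a\<in>F. supp (\<lambda>w. c a * mon (p a) w))"
    using assms by (meson finite.emptyI finite.insertI finite_UN_I finite_subset)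
qed

lemma fr_carrier_iff:
  "f \<in> fr_carrier A S \<longleftrightarrow> finite (supp f) \<and> (\<forall>w\<in>supp f. set w \<subseteq> Inl ` A \<union> Inr ` S)"
  by (auto simp: fr_carrier_def supp_def)

lemma mon_closed: "set u \<subseteq> Inl ` A \<union> Inr ` S \<Longrightarrow> mon u \<in> fr_carrier A S"
  by (simp add: fr_carrier_iff supp_mon)

lemma conv_closed:
  assumes "f \<in> fr_carrier A S" "g \<in> fr_carrier A S"
  shows "conv f g \<in> fr_carrier A S"
  unfolding fr_carrier_iff
proof
  show "finite (supp (conv f g))"
    using assms by (intro finite_subset[OF supp_conv]) (simp add: fr_carrier_iff)
  show "\<forall>w\<in>supp (conv f g). set w \<subseteq> Inl ` A \<union> Inr ` S"
  proof
    fix w assume "w \<in> supp (conv f g)"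
    then obtain u v where "u \<in> supp f" "v \<in> supp g" "w = u @ v" using supp_conv[of f g] by auto
    then show "set w \<subseteq> Inl ` A \<union> Inr ` S" using assms by (auto simp: fr_carrier_iff)
  qed
qed

lemma add_closed_fr:
  assumes "f \<in> fr_carrier A S" "g \<in> fr_carrier A S"
  shows "(\<lambda>w. f w + g w) \<in> fr_carrier A S"
proof -
  have "supp (\<lambda>w. f w + g w) \<subseteq> supp f \<union> supp g" by (auto simp: supp_def)
  then show ?thesis
    using assms unfolding fr_carrier_iff by (meson Un_iff finite_Un rev_finite_subset subsetD)
qed

lemma scale_closed_fr: "f \<in> fr_carrier A S \<Longrightarrow> (\<lambda>w. c * f w) \<in> fr_carrier A S"
  by (auto simp: fr_carrier_iff supp_def)

lemma neg_closed_fr: "f \<in> fr_carrier A S \<Longrightarrow> (\<lambda>w. - f w) \<in> fr_carrier A S"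
  by (simp add: fr_carrier_iff supp_def)

lemma diff_closed_fr:
  "f \<in> fr_carrier A S \<Longrightarrow> g \<in> fr_carrier A S \<Longrightarrow> (\<lambda>w. f w - g w) \<in> fr_carrier A S"
  using add_closed_fr[OF _ neg_closed_fr] by simp

lemma zero_closed_fr: "(\<lambda>w. 0) \<in> fr_carrier A S"
  by (simp add: fr_carrier_iff supp_def)

lemma sum_mon_closed_fr:
  assumes "finite F" "\<And>u. u \<in> F \<Longrightarrow> set u \<subseteq> Inl ` A \<union> Inr ` S"
  shows "(\<lambda>w. \<Sum>u\<in>F. c u * mon u w) \<in> fr_carrier A S"
  using assms by (induction F rule: finite_induct) (auto intro!: add_closed_fr scale_closed_fr mon_closed zero_closed_fr)

lemma ring_free_ring: "ring (free_ring A S)"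
proof (rule ringI)
  show "abelian_group (free_ring A S)"
    by (rule abelian_groupI)
       (auto simp: free_ring_simps add_closed_fr zero_closed_fr intro!: bexI[OF _ neg_closed_fr])
  show "Group.monoid (free_ring A S)"
    by (rule monoidI)
       (auto simp: free_ring_simps conv_closed conv_one_left conv_one_right intro!: mon_closed conv_assoc
             dest: fr_carrier_iff[THEN iffD1])
qed (auto simp: free_ring_simps conv_add_left conv_add_right)

lemma fr_carrier_induct [consumes 1, case_names zero add neg mult one letter var]:
  assumes f: "f \<in> fr_carrier A S"
    and zero: "P (\<lambda>w. 0)"
    and add: "\<And>f g. f \<in> fr_carrier A S \<Longrightarrow> g \<in> fr_carrier A S \<Longrightarrow> P f \<Longrightarrow> P g \<Longrightarrow> P (\<lambda>w. f w + g w)"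
    and neg: "\<And>f. f \<in> fr_carrier A S \<Longrightarrow> P f \<Longrightarrow> P (\<lambda>w. - f w)"
    and mult: "\<And>f g. f \<in> fr_carrier A S \<Longrightarrow> g \<in> fr_carrier A S \<Longrightarrow> P f \<Longrightarrow> P g \<Longrightarrow> P (conv f g)"
    and one: "P (mon [])"
    and letter: "\<And>a. a \<in> A \<Longrightarrow> P (mon [Inl a])"
    and var: "\<And>s. s \<in> S \<Longrightarrow> P (mon [Inr s])"
  shows "P f"
proof -
  have P_mon: "P (mon u)" if "set u \<subseteq> Inl ` A \<union> Inr ` S" for u
    using that
  proof (induction u)
    case Nil then show ?case using one by simp
  next
    case (Cons l u)
    have l: "mon [l] \<in> fr_carrier A S" "P (mon [l])"
      using Cons.prems letter var by (auto intro: mon_closed)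
    have "mon (l # u) = conv (mon [l]) (mon u)" by (simp add: conv_mon)
    then show ?case using mult[OF l(1) mon_closed l(2) Cons.IH] Cons.prems by simp
  qed
  have P_nat_mon: "P (\<lambda>w. int n * mon u w)" if "set u \<subseteq> Inl ` A \<union> Inr ` S" for u n
  proof (induction n)
    case 0 then show ?case using zero by simp
  next
    case (Suc n)
    have "P (\<lambda>w. int n * mon u w + mon u w)"
      by (rule add[OF scale_closed_fr[OF mon_closed[OF that]] mon_closed[OF that] Suc.IH P_mon[OF that]])
    then show ?case by (simp add: algebra_simps)
  qed
  have P_int_mon: "P (\<lambda>w. c * mon u w)" if "set u \<subseteq> Inl ` A \<union> Inr ` S" for u c
  proof (cases "c \<ge> 0")
    case True
    then show ?thesis using P_nat_mon[OF that, of "nat c"] by simp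
  next
    case False
    have "P (\<lambda>w. - (int (nat (- c)) * mon u w))"
      by (rule neg[OF scale_closed_fr[OF mon_closed[OF that]] P_nat_mon[OF that]])
    then show ?thesis using False by simp
  qed
  have P_sum: "P (\<lambda>w. \<Sum>u\<in>F. c u * mon u w)"
    if "finite F" "F \<subseteq> supp f" for F c
    using that
  proof (induction F rule: finite_induct)
    case empty then show ?case using zero by simp
  next
    case (insert u F)
    have words: "set v \<subseteq> Inl ` A \<union> Inr ` S" if "v \<in> insert u F" for v
      using f insert.prems that by (auto simp: fr_carrier_iff)
    have sum_closed: "(\<lambda>w. \<Sum>v\<in>F. c v * mon v w) \<in> fr_carrier A S"
      using insert.hyps(1) words by (intro sum_mon_closed_fr) auto
    have "P (\<lambda>w. c u * mon u w + (\<Sum>v\<in>F. c v * mon v w))"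
      using insert words by (intro add[OF scale_closed_fr[OF mon_closed] sum_closed P_int_mon]) auto
    then show ?case using insert by simp
  qed
  have "finite (supp f)" using f by (simp add: fr_carrier_iff)
  from P_sum[OF this order.refl, of f] show ?thesis using sum_supp_mon[OF \<open>finite (supp f)\<close>] by simp
qed

section \<open>Evaluating the free ring in a ring\<close>

definition word_eval :: "('q, 'n) ring_scheme \<Rightarrow> ('a \<Rightarrow> 'q) \<Rightarrow> ('a \<Rightarrow> 'q) \<Rightarrow> ('a + 'a) list \<Rightarrow> 'q" where
  "word_eval Q el er w = foldr (\<lambda>l q. case_sum el er l \<otimes>\<^bsub>Q\<^esub> q) w \<one>\<^bsub>Q\<^esub>"

definition fr_eval ::
  "('q, 'n) ring_scheme \<Rightarrow> ('a \<Rightarrow> 'q) \<Rightarrow> ('a \<Rightarrow> 'q) \<Rightarrow> (('a + 'a) list \<Rightarrow> int) \<Rightarrow> 'q" where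
  "fr_eval Q el er f = (\<Oplus>\<^bsub>Q\<^esub>w\<in>supp f. add_pow Q (f w) (word_eval Q el er w))"

lemma (in ring) add_pow_mult_add_pow:
  fixes m n :: int
  assumes "x \<in> carrier R" "y \<in> carrier R"
  shows "add_pow R m x \<otimes> add_pow R n y = add_pow R (m * n) (x \<otimes> y)"
proof -
  have "add_pow R m x \<otimes> add_pow R n y = add_pow R m (x \<otimes> add_pow R n y)"
    by (rule add_pow_ldistr_int[OF assms(1) add.int_pow_closed[OF assms(2)]])
  also have "\<dots> = add_pow R m (add_pow R n (x \<otimes> y))"
    using add_pow_rdistr_int[OF assms] by simp
  also have "\<dots> = add_pow R (m * n) (x \<otimes> y)"
    using assms by (simp add: add.int_pow_pow mult.commute)
  finally show ?thesis .
qed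

locale free_ring_eval = Q: ring Q for Q :: "('q, 'n) ring_scheme" +
  fixes el er :: "'a \<Rightarrow> 'q"
  assumes el_closed: "el a \<in> carrier Q" and er_closed: "er s \<in> carrier Q"
begin

abbreviation "wev \<equiv> word_eval Q el er"
abbreviation "ev \<equiv> fr_eval Q el er"

lemma letter_closed: "case_sum el er l \<in> carrier Q"
  by (cases l) (auto simp: el_closed er_closed)

lemma word_eval_Nil [simp]: "wev [] = \<one>\<^bsub>Q\<^esub>"
  by (simp add: word_eval_def)

lemma word_eval_Cons [simp]: "wev (l # w) = case_sum el er l \<otimes>\<^bsub>Q\<^esub> wev w"
  by (simp add: word_eval_def)

lemma word_eval_closed: "wev w \<in> carrier Q"
  by (induction w) (auto simp: letter_closed)

lemma word_eval_append: "wev (u @ v) = wev u \<otimes>\<^bsub>Q\<^esub> wev v"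
  by (induction u) (auto simp: letter_closed word_eval_closed Q.m_assoc)

lemma add_pow_word_eval_closed: "add_pow Q (k::int) (wev w) \<in> carrier Q"
  by (rule Q.add.int_pow_closed[OF word_eval_closed])

lemma fr_eval_superset:
  assumes "finite F" "supp f \<subseteq> F"
  shows "ev f = (\<Oplus>\<^bsub>Q\<^esub>w\<in>F. add_pow Q (f w) (wev w))"
  unfolding fr_eval_def
proof (rule Q.add.finprod_mono_neutral_cong_left[OF assms])
  fix w assume "w \<in> F - supp f"
  then have "f w = 0" by (simp add: supp_def)
  then show "add_pow Q (f w) (wev w) = \<zero>\<^bsub>Q\<^esub>" by (simp add: add_pow_def)
qed (auto simp: add_pow_word_eval_closed)

lemma fr_eval_closed: "ev f \<in> carrier Q"
  unfolding fr_eval_def by (rule Q.finsum_closed) (auto simp: add_pow_word_eval_closed)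

lemma fr_eval_add:
  assumes "finite (supp f)" "finite (supp g)"
  shows "ev (\<lambda>w. f w + g w) = ev f \<oplus>\<^bsub>Q\<^esub> ev g"
proof -
  let ?F = "supp f \<union> supp g"
  have fin: "finite ?F" using assms by simp
  have "supp (\<lambda>w. f w + g w) \<subseteq> ?F" by (auto simp: supp_def)
  then have "ev (\<lambda>w. f w + g w) = (\<Oplus>\<^bsub>Q\<^esub>w\<in>?F. add_pow Q (f w + g w) (wev w))"
    by (rule fr_eval_superset[OF fin])
  also have "\<dots> = (\<Oplus>\<^bsub>Q\<^esub>w\<in>?F. add_pow Q (f w) (wev w) \<oplus>\<^bsub>Q\<^esub> add_pow Q (g w) (wev w))"
    using Q.add.int_pow_mult word_eval_closed by simp
  also have "\<dots> = (\<Oplus>\<^bsub>Q\<^esub>w\<in>?F. add_pow Q (f w) (wev w)) \<oplus>\<^bsub>Q\<^esub> (\<Oplus>\<^bsub>Q\<^esub>w\<in>?F. add_pow Q (g w) (wev w))"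
    by (rule Q.finsum_addf) (auto simp: add_pow_word_eval_closed)
  also have "\<dots> = ev f \<oplus>\<^bsub>Q\<^esub> ev g"
    using fr_eval_superset[OF fin, of f] fr_eval_superset[OF fin, of g] by auto
  finally show ?thesis .
qed

lemma fr_eval_diff:
  assumes "finite (supp f)" "finite (supp g)"
  shows "ev (\<lambda>w. f w - g w) = ev f \<ominus>\<^bsub>Q\<^esub> ev g"
proof -
  have "supp (\<lambda>w. f w - g w) \<subseteq> supp f \<union> supp g" by (auto simp: supp_def)
  then have fin: "finite (supp (\<lambda>w. f w - g w))" using assms by (meson finite_Un finite_subset)
  have "f = (\<lambda>w. (f w - g w) + g w)" by simp
  then have "ev f = ev (\<lambda>w. f w - g w) \<oplus>\<^bsub>Q\<^esub> ev g"
    using fr_eval_add[OF fin assms(2)] by metis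
  then have "ev f \<ominus>\<^bsub>Q\<^esub> ev g = (ev (\<lambda>w. f w - g w) \<oplus>\<^bsub>Q\<^esub> ev g) \<oplus>\<^bsub>Q\<^esub> \<ominus>\<^bsub>Q\<^esub> ev g"
    by (simp only: Q.minus_eq)
  also have "\<dots> = ev (\<lambda>w. f w - g w)"
    by (simp add: Q.a_assoc Q.r_neg fr_eval_closed)
  finally show ?thesis by simp
qed

lemma fr_eval_scale_mon: "ev (\<lambda>w. c * mon u w) = add_pow Q c (wev u)"
proof -
  have "supp (\<lambda>w. c * mon u w) \<subseteq> {u}" by (auto simp: supp_def mon_def)
  then have "ev (\<lambda>w. c * mon u w) = (\<Oplus>\<^bsub>Q\<^esub>w\<in>{u}. add_pow Q (c * mon u w) (wev w))"
    by (rule fr_eval_superset[rotated]) simp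
  also have "\<dots> = add_pow Q c (wev u)" by (simp add: mon_def add_pow_word_eval_closed)
  finally show ?thesis .
qed

lemma fr_eval_mon [simp]: "ev (mon u) = wev u"
  using fr_eval_scale_mon[of 1 u] by (simp add: word_eval_closed)

lemma fr_eval_sum:
  assumes "finite F" "\<And>a. a \<in> F \<Longrightarrow> finite (supp (G a))"
  shows "ev (\<lambda>w. \<Sum>a\<in>F. G a w) = (\<Oplus>\<^bsub>Q\<^esub>a\<in>F. ev (G a))"
  using assms
proof (induction F rule: finite_induct)
  case empty then show ?case by (simp add: fr_eval_def supp_def)
next
  case (insert x F)
  have "finite (supp (\<lambda>w. \<Sum>a\<in>F. G a w))"
    using insert by (intro finite_subset[OF supp_sum_subset]) auto
  then have "ev (\<lambda>w. \<Sum>a\<in>insert x F. G a w) = ev (G x) \<oplus>\<^bsub>Q\<^esub> ev (\<lambda>w. \<Sum>a\<in>F. G a w)"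
    using insert fr_eval_add[of "G x" "\<lambda>w. \<Sum>a\<in>F. G a w"] by simp
  then show ?case using insert by (simp add: fr_eval_closed)
qed

lemma fr_eval_conv:
  assumes f: "finite (supp f)" and g: "finite (supp g)"
  shows "ev (conv f g) = ev f \<otimes>\<^bsub>Q\<^esub> ev g"
proof -
  let ?U = "supp f" and ?V = "supp g"
  let ?term = "\<lambda>u v w. (f u * g v) * mon (u @ v) w"
  have "conv f g = conv (\<lambda>w. \<Sum>u\<in>?U. f u * mon u w) (\<lambda>w. \<Sum>v\<in>?V. g v * mon v w)"
    by (simp only: sum_supp_mon f g)
  also have "\<dots> = (\<lambda>w. \<Sum>u\<in>?U. \<Sum>v\<in>?V. ?term u v w)"
    by (simp add: conv_sum_left conv_sum_right conv_scale_left conv_scale_right conv_mon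
        sum_distrib_left mult.assoc)
  finally have "ev (conv f g) = ev (\<lambda>w. \<Sum>u\<in>?U. (\<lambda>u w. \<Sum>v\<in>?V. ?term u v w) u w)"
    by simp
  also have "\<dots> = (\<Oplus>\<^bsub>Q\<^esub>u\<in>?U. ev (\<lambda>w. \<Sum>v\<in>?V. ?term u v w))"
    using f g by (intro fr_eval_sum finite_supp_sum_mon)
  also have "\<dots> = (\<Oplus>\<^bsub>Q\<^esub>u\<in>?U. \<Oplus>\<^bsub>Q\<^esub>v\<in>?V. add_pow Q (f u * g v) (wev (u @ v)))"
  proof (rule Q.finsum_cong')
    fix u
    show "ev (\<lambda>w. \<Sum>v\<in>?V. ?term u v w) = (\<Oplus>\<^bsub>Q\<^esub>v\<in>?V. add_pow Q (f u * g v) (wev (u @ v)))"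
      using fr_eval_sum[OF g, of "?term u"] fr_eval_scale_mon by (simp add: supp_def mon_def)
  qed (auto intro!: Q.finsum_closed simp: add_pow_word_eval_closed)
  also have "\<dots> = (\<Oplus>\<^bsub>Q\<^esub>u\<in>?U. \<Oplus>\<^bsub>Q\<^esub>v\<in>?V. add_pow Q (f u) (wev u) \<otimes>\<^bsub>Q\<^esub> add_pow Q (g v) (wev v))"
    by (simp add: Q.add_pow_mult_add_pow word_eval_closed word_eval_append)
  also have "\<dots> = (\<Oplus>\<^bsub>Q\<^esub>u\<in>?U. add_pow Q (f u) (wev u) \<otimes>\<^bsub>Q\<^esub> ev g)"
    unfolding fr_eval_def
    by (rule Q.finsum_cong') (auto simp: Q.finsum_rdistr[OF g] add_pow_word_eval_closed)
  also have "\<dots> = ev f \<otimes>\<^bsub>Q\<^esub> ev g"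
    unfolding fr_eval_def[of Q el er f]
    by (rule Q.finsum_ldistr[OF f, symmetric]) (auto simp: add_pow_word_eval_closed fr_eval_closed)
  finally show ?thesis .
qed

lemma fr_eval_hom: "ev \<in> ring_hom (free_ring A S) Q"
proof (rule ring_hom_memI)
  fix f g assume "f \<in> carrier (free_ring A S)" and "g \<in> carrier (free_ring A S)"
  then have f: "finite (supp f)" and g: "finite (supp g)"
    by (auto simp: free_ring_simps fr_carrier_iff)
  show "ev f \<in> carrier Q" by (rule fr_eval_closed)
  show "ev (f \<otimes>\<^bsub>free_ring A S\<^esub> g) = ev f \<otimes>\<^bsub>Q\<^esub> ev g"
    using fr_eval_conv[OF f g] by (simp add: free_ring_simps)
  show "ev (f \<oplus>\<^bsub>free_ring A S\<^esub> g) = ev f \<oplus>\<^bsub>Q\<^esub> ev g"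
    using fr_eval_add[OF f g] by (simp add: free_ring_simps)
qed (simp add: free_ring_simps)

lemma fr_eval_loc_rels:
  assumes add: "\<And>a b. a \<in> carrier R \<Longrightarrow> b \<in> carrier R \<Longrightarrow> el (a \<oplus>\<^bsub>R\<^esub> b) = el a \<oplus>\<^bsub>Q\<^esub> el b"
    and mult: "\<And>a b. a \<in> carrier R \<Longrightarrow> b \<in> carrier R \<Longrightarrow> el (a \<otimes>\<^bsub>R\<^esub> b) = el a \<otimes>\<^bsub>Q\<^esub> el b"
    and one: "el \<one>\<^bsub>R\<^esub> = \<one>\<^bsub>Q\<^esub>"
    and inverse: "\<And>s. s \<in> S \<Longrightarrow> el s \<otimes>\<^bsub>Q\<^esub> er s = \<one>\<^bsub>Q\<^esub> \<and> er s \<otimes>\<^bsub>Q\<^esub> el s = \<one>\<^bsub>Q\<^esub>"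
    and g: "g \<in> loc_rels R S"
  shows "ev g = \<zero>\<^bsub>Q\<^esub>"
proof -
  have fin: "finite (supp (mon u))" "finite (supp (\<lambda>w. mon u w - mon v w))" for u v
    by (simp_all add: supp_mon) (rule finite_subset[of _ "{u, v}"], auto simp: supp_def mon_def)
  have ev_rel: "ev (\<lambda>w. mon u w - mon v w) = wev u \<ominus>\<^bsub>Q\<^esub> wev v" for u v
    using fr_eval_diff[OF fin(1) fin(1)] by simp
  from g consider
      (sum) a b where "a \<in> carrier R" "b \<in> carrier R"
        "g = (\<lambda>w. mon [Inl (a \<oplus>\<^bsub>R\<^esub> b)] w - mon [Inl a] w - mon [Inl b] w)"
    | (product) a b where "a \<in> carrier R" "b \<in> carrier R"
        "g = (\<lambda>w. mon [Inl (a \<otimes>\<^bsub>R\<^esub> b)] w - mon [Inl a, Inl b] w)"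
    | (unit) "g = (\<lambda>w. mon [Inl \<one>\<^bsub>R\<^esub>] w - mon [] w)"
    | (right_inv) s where "s \<in> S" "g = (\<lambda>w. mon [Inl s, Inr s] w - mon [] w)"
    | (left_inv) s where "s \<in> S" "g = (\<lambda>w. mon [Inr s, Inl s] w - mon [] w)"
    unfolding loc_rels_def by blast
  then show ?thesis
  proof cases
    case (sum a b)
    have "ev g = (el (a \<oplus>\<^bsub>R\<^esub> b) \<ominus>\<^bsub>Q\<^esub> el a) \<ominus>\<^bsub>Q\<^esub> el b"
      using fr_eval_diff[OF fin(2) fin(1), of "[Inl (a \<oplus>\<^bsub>R\<^esub> b)]" "[Inl a]" "[Inl b]"] ev_rel
      by (simp add: sum(3) el_closed)
    also have "\<dots> = (el a \<oplus>\<^bsub>Q\<^esub> el b) \<oplus>\<^bsub>Q\<^esub> \<ominus>\<^bsub>Q\<^esub> (el a \<oplus>\<^bsub>Q\<^esub> el b)"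
      using sum(1,2) el_closed by (simp add: add Q.minus_eq Q.minus_add Q.a_assoc)
    also have "\<dots> = \<zero>\<^bsub>Q\<^esub>"
      using el_closed by (simp add: Q.r_neg)
    finally show ?thesis .
  next
    case (product a b)
    then show ?thesis using ev_rel mult el_closed by (simp add: Q.r_neg Q.minus_eq)
  next
    case unit
    then show ?thesis using ev_rel by (simp add: one Q.r_neg Q.minus_eq)
  next
    case (right_inv s)
    then show ?thesis using ev_rel inverse[of s] er_closed by (simp add: Q.r_neg Q.minus_eq)
  next
    case (left_inv s)
    then show ?thesis using ev_rel inverse[of s] el_closed by (simp add: Q.r_neg Q.minus_eq)
  qed
qed

end

section \<open>Units, quotient rings and rings of fractions\<close>

lemma (in ring) Units_mult_eq_zero:
  assumes u: "u \<in> Units R" and x: "x \<in> carrier R"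
  shows "u \<otimes> x = \<zero> \<longleftrightarrow> x = \<zero>" and "x \<otimes> u = \<zero> \<longleftrightarrow> x = \<zero>"
proof -
  have closed: "u \<in> carrier R" "inv u \<in> carrier R" using u by auto
  show "u \<otimes> x = \<zero> \<longleftrightarrow> x = \<zero>"
  proof
    assume "u \<otimes> x = \<zero>"
    then have "inv u \<otimes> (u \<otimes> x) = \<zero>" using closed by simp
    then show "x = \<zero>" using closed u x by (simp flip: m_assoc)
  qed (simp add: closed)
  show "x \<otimes> u = \<zero> \<longleftrightarrow> x = \<zero>"
  proof
    assume "x \<otimes> u = \<zero>"
    then have "(x \<otimes> u) \<otimes> inv u = \<zero>" using closed by simp
    then show "x = \<zero>" using closed u x by (simp add: m_assoc)
  qed (simp add: closed)
qed

lemma (in ring_hom_ring) hom_inv_mult: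
  assumes "u \<in> Units R"
  shows "h (inv u) \<otimes>\<^bsub>S\<^esub> h u = \<one>\<^bsub>S\<^esub>" "h u \<otimes>\<^bsub>S\<^esub> h (inv u) = \<one>\<^bsub>S\<^esub>"
proof -
  have "u \<in> carrier R" "inv u \<in> carrier R" using assms by auto
  then have "h (inv u) \<otimes>\<^bsub>S\<^esub> h u = h (inv u \<otimes> u)" "h u \<otimes>\<^bsub>S\<^esub> h (inv u) = h (u \<otimes> inv u)"
    by simp_all
  then show "h (inv u) \<otimes>\<^bsub>S\<^esub> h u = \<one>\<^bsub>S\<^esub>" "h u \<otimes>\<^bsub>S\<^esub> h (inv u) = \<one>\<^bsub>S\<^esub>"
    using assms by simp_all
qed

lemma (in ring_hom_ring) hom_Units_closed:
  assumes "u \<in> Units R"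
  shows "h u \<in> Units S"
proof -
  have "h u \<in> carrier S" "h (inv u) \<in> carrier S"
    using R.Units_closed[OF assms] R.Units_inv_closed[OF assms] by simp_all
  with hom_inv_mult[OF assms] show ?thesis unfolding Units_def by blast
qed

lemma (in ring_hom_ring) hom_inv_Units: "u \<in> Units R \<Longrightarrow> h (inv u) = inv\<^bsub>S\<^esub> (h u)"
  using hom_inv_mult[of u] by (intro S.inv_unique') (auto intro: hom_closed)

lemma (in ideal) FactRing_carrier: "carrier (R Quot I) = (+>) I ` carrier R"
  by (auto simp: FactRing_def A_RCOSETS_def')

lemma (in ideal) rcos_eq_zero_iff: "r \<in> carrier R \<Longrightarrow> I +> r = \<zero>\<^bsub>R Quot I\<^esub> \<longleftrightarrow> r \<in> I"
  using rcos_const_imp_mem a_rcos_zero[OF ideal_axioms] by (auto simp: FactRing_def)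

lemma (in ring_hom_ring) FactRing_lift:
  assumes I: "ideal I R" and ker: "I \<subseteq> a_kernel R S h"
  shows "(\<lambda>X. the_elem (h ` X)) \<in> ring_hom (R Quot I) S"
    and "\<And>x. x \<in> carrier R \<Longrightarrow> the_elem (h ` (I +> x)) = h x"
proof -
  interpret I: ideal I R by (rule I)
  have coset_image: "h ` (I +> x) = {h x}" if x: "x \<in> carrier R" for x
  proof -
    have "h (i \<oplus> x) = h x" if i: "i \<in> I" for i
    proof -
      have "i \<in> carrier R" using i by (rule I.Icarr)
      moreover have "h i = \<zero>\<^bsub>S\<^esub>" using ker i unfolding a_kernel_def' by blast
      ultimately show ?thesis using x by simp
    qed
    then have "h ` (I +> x) = (\<lambda>i. h x) ` I"
      unfolding a_r_coset_def' by (auto simp: image_iff)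
    also have "\<dots> = {h x}" using I.zero_closed by blast
    finally show ?thesis .
  qed
  then show lift_coset: "\<And>x. x \<in> carrier R \<Longrightarrow> the_elem (h ` (I +> x)) = h x" by simp
  show "(\<lambda>X. the_elem (h ` X)) \<in> ring_hom (R Quot I) S"
  proof (rule ring_hom_memI)
    fix X Y assume "X \<in> carrier (R Quot I)" "Y \<in> carrier (R Quot I)"
    then obtain x y where x: "x \<in> carrier R" "X = I +> x" and y: "y \<in> carrier R" "Y = I +> y"
      using I.FactRing_carrier by auto
    show "the_elem (h ` X) \<in> carrier S" using x lift_coset by simp
    have "X \<otimes>\<^bsub>R Quot I\<^esub> Y = I +> (x \<otimes> y)"
      using x y by (simp add: FactRing_def I.rcoset_mult_add)
    then show "the_elem (h ` (X \<otimes>\<^bsub>R Quot I\<^esub> Y)) = the_elem (h ` X) \<otimes>\<^bsub>S\<^esub> the_elem (h ` Y)"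
      using x y lift_coset by simp
    have "X \<oplus>\<^bsub>R Quot I\<^esub> Y = I +> (x \<oplus> y)"
      using x y ring_hom_add[OF I.rcos_ring_hom] by simp
    then show "the_elem (h ` (X \<oplus>\<^bsub>R Quot I\<^esub> Y)) = the_elem (h ` X) \<oplus>\<^bsub>S\<^esub> the_elem (h ` Y)"
      using x y lift_coset by simp
  next
    show "the_elem (h ` \<one>\<^bsub>R Quot I\<^esub>) = \<one>\<^bsub>S\<^esub>"
      using lift_coset[of \<one>] by (simp add: FactRing_def)
  qed
qed

lemma (in ring_hom_ring) hom_Units_iff:
  assumes bij: "bij_betw h (carrier R) (carrier S)" and x: "x \<in> carrier R"
  shows "h x \<in> Units S \<longleftrightarrow> x \<in> Units R"
proof
  assume "h x \<in> Units S"
  then obtain y' where y': "y' \<in> carrier S" "y' \<otimes>\<^bsub>S\<^esub> h x = \<one>\<^bsub>S\<^esub>" "h x \<otimes>\<^bsub>S\<^esub> y' = \<one>\<^bsub>S\<^esub>"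
    unfolding Units_def by blast
  then obtain y where y: "y \<in> carrier R" "y' = h y"
    using bij unfolding bij_betw_def by auto
  have inj: "inj_on h (carrier R)" using bij by (simp add: bij_betw_def)
  have "h (y \<otimes> x) = h \<one>" "h (x \<otimes> y) = h \<one>" using x y y' by simp_all
  then have "y \<otimes> x = \<one>" "x \<otimes> y = \<one>" using inj_onD[OF inj] x y by simp_all
  then show "x \<in> Units R" using x y unfolding Units_def by blast
qed (rule hom_Units_closed)

lemma (in ring_hom_ring) mult_set_Units_preimage:
  assumes nontrivial: "\<one>\<^bsub>S\<^esub> \<noteq> \<zero>\<^bsub>S\<^esub>"
  shows "mult_set R {a \<in> carrier R. h a \<in> Units S}"
  unfolding mult_set_def
proof (intro conjI ballI)
  have "\<zero>\<^bsub>S\<^esub> \<notin> Units S"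
  proof
    assume "\<zero>\<^bsub>S\<^esub> \<in> Units S"
    then have "\<zero>\<^bsub>S\<^esub> \<otimes>\<^bsub>S\<^esub> inv\<^bsub>S\<^esub> \<zero>\<^bsub>S\<^esub> = \<one>\<^bsub>S\<^esub>" by (rule S.Units_r_inv)
    with S.Units_inv_closed[OF \<open>\<zero>\<^bsub>S\<^esub> \<in> Units S\<close>] nontrivial show False by simp
  qed
  then show "\<zero> \<notin> {a \<in> carrier R. h a \<in> Units S}" by simp
  fix a b assume "a \<in> {a \<in> carrier R. h a \<in> Units S}" "b \<in> {a \<in> carrier R. h a \<in> Units S}"
  then show "a \<otimes> b \<in> {a \<in> carrier R. h a \<in> Units S}" by (simp add: S.Units_m_closed)
qed auto

lemma (in ring_hom_ring) mult_set_image: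
  assumes T: "mult_set R T" and nonzero: "\<And>t. t \<in> T \<Longrightarrow> h t \<noteq> \<zero>\<^bsub>S\<^esub>"
  shows "mult_set S (h ` T)"
  unfolding mult_set_def
proof (intro conjI ballI)
  have TR: "T \<subseteq> carrier R" "\<one> \<in> T" and mult: "\<And>x y. x \<in> T \<Longrightarrow> y \<in> T \<Longrightarrow> x \<otimes> y \<in> T"
    using T by (auto simp: mult_set_def)
  show "h ` T \<subseteq> carrier S" using TR by auto
  show "\<one>\<^bsub>S\<^esub> \<in> h ` T" using TR(2) hom_one by (metis image_eqI)
  show "\<zero>\<^bsub>S\<^esub> \<notin> h ` T"
  proof
    assume "\<zero>\<^bsub>S\<^esub> \<in> h ` T"
    then obtain t where "t \<in> T" "h t = \<zero>\<^bsub>S\<^esub>" by (metis imageE)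
    then show False using nonzero by blast
  qed
  fix a b assume "a \<in> h ` T" "b \<in> h ` T"
  then obtain x y where xy: "x \<in> T" "y \<in> T" and ab: "a = h x" "b = h y" by auto
  moreover have "x \<in> carrier R" "y \<in> carrier R" using xy TR(1) by auto
  ultimately have "a \<otimes>\<^bsub>S\<^esub> b = h (x \<otimes> y)" by simp
  then show "a \<otimes>\<^bsub>S\<^esub> b \<in> h ` T" using mult[OF xy] by blast
qed

definition left_fractions :: "('a, 'm) ring_scheme \<Rightarrow> 'a set \<Rightarrow> ('q, 'n) ring_scheme \<Rightarrow> ('a \<Rightarrow> 'q) \<Rightarrow> bool" where
  "left_fractions A T Q \<iota> \<longleftrightarrow> (\<forall>q\<in>carrier Q. \<exists>t\<in>T. \<exists>a\<in>carrier A. q = inv\<^bsub>Q\<^esub> (\<iota> t) \<otimes>\<^bsub>Q\<^esub> \<iota> a)"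

definition right_fractions :: "('a, 'm) ring_scheme \<Rightarrow> 'a set \<Rightarrow> ('q, 'n) ring_scheme \<Rightarrow> ('a \<Rightarrow> 'q) \<Rightarrow> bool" where
  "right_fractions A T Q \<iota> \<longleftrightarrow> (\<forall>q\<in>carrier Q. \<exists>t\<in>T. \<exists>a\<in>carrier A. q = \<iota> a \<otimes>\<^bsub>Q\<^esub> inv\<^bsub>Q\<^esub> (\<iota> t))"

lemma (in ring_hom_ring) right_fractions_if_left_fractions:
  assumes T: "T \<subseteq> carrier R" and units: "h ` T \<subseteq> Units S"
    and left: "left_fractions R T S h"
    and Ore: "\<And>c w. c \<in> carrier R \<Longrightarrow> w \<in> T \<Longrightarrow> \<exists>w'\<in>T. \<exists>c'\<in>carrier R. c \<otimes> w' = w \<otimes> c'"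
  shows "right_fractions R T S h"
  unfolding right_fractions_def
proof
  fix q assume "q \<in> carrier S"
  then obtain w c where w: "w \<in> T" and c: "c \<in> carrier R" and q: "q = inv\<^bsub>S\<^esub> (h w) \<otimes>\<^bsub>S\<^esub> h c"
    using left by (auto simp: left_fractions_def)
  obtain w' c' where w': "w' \<in> T" and c': "c' \<in> carrier R" and eq: "c \<otimes> w' = w \<otimes> c'"
    using Ore[OF c w] by blast
  have wR: "w \<in> carrier R" and w'R: "w' \<in> carrier R" using T w w' by auto
  have u: "h w \<in> Units S" "h w' \<in> Units S" using units w w' by auto
  note closed = S.Units_closed[OF u(1)] S.Units_closed[OF u(2)] S.Units_inv_closed[OF u(1)]
    S.Units_inv_closed[OF u(2)] hom_closed[OF c] hom_closed[OF c']
  have "h c' \<otimes>\<^bsub>S\<^esub> inv\<^bsub>S\<^esub> (h w') = inv\<^bsub>S\<^esub> (h w) \<otimes>\<^bsub>S\<^esub> ((h w \<otimes>\<^bsub>S\<^esub> h c') \<otimes>\<^bsub>S\<^esub> inv\<^bsub>S\<^esub> (h w'))"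
    using closed u by (simp add: S.m_assoc flip: S.m_assoc[of "inv\<^bsub>S\<^esub> (h w)"])
  also have "\<dots> = inv\<^bsub>S\<^esub> (h w) \<otimes>\<^bsub>S\<^esub> ((h c \<otimes>\<^bsub>S\<^esub> h w') \<otimes>\<^bsub>S\<^esub> inv\<^bsub>S\<^esub> (h w'))"
    using wR w'R c c' eq by (simp flip: hom_mult)
  also have "\<dots> = q"
    using closed u by (simp add: q S.m_assoc)
  finally show "\<exists>t\<in>T. \<exists>a\<in>carrier R. q = h a \<otimes>\<^bsub>S\<^esub> inv\<^bsub>S\<^esub> (h t)" using w' c' by metis
qed

locale ring_embedding = A: ring A + Q: ring Q
  for A :: "('a, 'm) ring_scheme" and Q :: "('q, 'n) ring_scheme" +
  fixes \<iota> :: "'a \<Rightarrow> 'q"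
  assumes hom: "\<iota> \<in> ring_hom A Q" and inj: "inj_on \<iota> (carrier A)"
begin

sublocale ring_hom_ring A Q \<iota>
  by (rule ring_hom_ringI2[OF A.ring_axioms Q.ring_axioms hom])

lemma regular_if_Units_image:
  assumes u: "u \<in> carrier A" and unit: "\<iota> u \<in> Units Q"
  shows "regular A u"
  unfolding regular_def
proof (intro conjI ballI impI)
  show "u \<in> carrier A" by (rule u)
  note closed = Q.Units_closed[OF unit] Q.Units_inv_closed[OF unit]
  fix b assume b: "b \<in> carrier A"
  have zero_iff: "b = \<zero>\<^bsub>A\<^esub>" if "\<iota> b = \<zero>\<^bsub>Q\<^esub>"
    using inj b that by (metis A.zero_closed hom_zero inj_onD)
  show "b = \<zero>\<^bsub>A\<^esub>" if "u \<otimes>\<^bsub>A\<^esub> b = \<zero>\<^bsub>A\<^esub>"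
  proof (rule zero_iff)
    have "\<iota> u \<otimes>\<^bsub>Q\<^esub> \<iota> b = \<zero>\<^bsub>Q\<^esub>" using that u b by (simp flip: hom_mult)
    then have "inv\<^bsub>Q\<^esub> (\<iota> u) \<otimes>\<^bsub>Q\<^esub> (\<iota> u \<otimes>\<^bsub>Q\<^esub> \<iota> b) = \<zero>\<^bsub>Q\<^esub>" using closed by simp
    then show "\<iota> b = \<zero>\<^bsub>Q\<^esub>" using closed unit b by (simp flip: Q.m_assoc)
  qed
  show "b = \<zero>\<^bsub>A\<^esub>" if "b \<otimes>\<^bsub>A\<^esub> u = \<zero>\<^bsub>A\<^esub>"
  proof (rule zero_iff)
    have "\<iota> b \<otimes>\<^bsub>Q\<^esub> \<iota> u = \<zero>\<^bsub>Q\<^esub>" using that u b by (simp flip: hom_mult)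
    then have "(\<iota> b \<otimes>\<^bsub>Q\<^esub> \<iota> u) \<otimes>\<^bsub>Q\<^esub> inv\<^bsub>Q\<^esub> (\<iota> u) = \<zero>\<^bsub>Q\<^esub>" using closed by simp
    then show "\<iota> b = \<zero>\<^bsub>Q\<^esub>" using closed unit b by (simp add: Q.m_assoc)
  qed
qed

lemma left_Ore_condition_if_left_fractions:
  assumes T: "T \<subseteq> carrier A" and units: "\<iota> ` T \<subseteq> Units Q" and left: "left_fractions A T Q \<iota>"
    and b: "b \<in> carrier A" and u: "u \<in> carrier A" and unit: "\<iota> u \<in> Units Q"
  shows "\<exists>w\<in>T. \<exists>c\<in>carrier A. w \<otimes>\<^bsub>A\<^esub> b = c \<otimes>\<^bsub>A\<^esub> u"
proof -
  have "\<iota> b \<otimes>\<^bsub>Q\<^esub> inv\<^bsub>Q\<^esub> (\<iota> u) \<in> carrier Q" using b unit by simp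
  then obtain w c where w: "w \<in> T" and c: "c \<in> carrier A"
    and q: "\<iota> b \<otimes>\<^bsub>Q\<^esub> inv\<^bsub>Q\<^esub> (\<iota> u) = inv\<^bsub>Q\<^esub> (\<iota> w) \<otimes>\<^bsub>Q\<^esub> \<iota> c"
    using left unfolding left_fractions_def by blast
  have wA: "w \<in> carrier A" and wu: "\<iota> w \<in> Units Q" using T units w by auto
  note closed = Q.Units_closed[OF wu] Q.Units_inv_closed[OF wu] Q.Units_closed[OF unit]
    Q.Units_inv_closed[OF unit] hom_closed[OF b] hom_closed[OF c]
  have "\<iota> (w \<otimes>\<^bsub>A\<^esub> b) = \<iota> w \<otimes>\<^bsub>Q\<^esub> ((\<iota> b \<otimes>\<^bsub>Q\<^esub> inv\<^bsub>Q\<^esub> (\<iota> u)) \<otimes>\<^bsub>Q\<^esub> \<iota> u)"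
    using wA b closed unit by (simp add: Q.m_assoc)
  also have "\<dots> = (\<iota> w \<otimes>\<^bsub>Q\<^esub> inv\<^bsub>Q\<^esub> (\<iota> w)) \<otimes>\<^bsub>Q\<^esub> (\<iota> c \<otimes>\<^bsub>Q\<^esub> \<iota> u)"
    using closed by (simp add: q Q.m_assoc)
  also have "\<dots> = \<iota> (c \<otimes>\<^bsub>A\<^esub> u)"
    using closed wu c u by simp
  finally have "w \<otimes>\<^bsub>A\<^esub> b = c \<otimes>\<^bsub>A\<^esub> u"
    using inj_onD[OF inj] wA b c u by simp
  then show ?thesis using w c by blast
qed

lemma right_Ore_condition_if_right_fractions:
  assumes T: "T \<subseteq> carrier A" and units: "\<iota> ` T \<subseteq> Units Q" and right: "right_fractions A T Q \<iota>"
    and b: "b \<in> carrier A" and u: "u \<in> carrier A" and unit: "\<iota> u \<in> Units Q"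
  shows "\<exists>w\<in>T. \<exists>c\<in>carrier A. b \<otimes>\<^bsub>A\<^esub> w = u \<otimes>\<^bsub>A\<^esub> c"
proof -
  have "inv\<^bsub>Q\<^esub> (\<iota> u) \<otimes>\<^bsub>Q\<^esub> \<iota> b \<in> carrier Q" using b unit by simp
  then obtain w c where w: "w \<in> T" and c: "c \<in> carrier A"
    and q: "inv\<^bsub>Q\<^esub> (\<iota> u) \<otimes>\<^bsub>Q\<^esub> \<iota> b = \<iota> c \<otimes>\<^bsub>Q\<^esub> inv\<^bsub>Q\<^esub> (\<iota> w)"
    using right unfolding right_fractions_def by blast
  have wA: "w \<in> carrier A" and wu: "\<iota> w \<in> Units Q" using T units w by auto
  note closed = Q.Units_closed[OF wu] Q.Units_inv_closed[OF wu] Q.Units_closed[OF unit]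
    Q.Units_inv_closed[OF unit] hom_closed[OF b] hom_closed[OF c]
  have "\<iota> (b \<otimes>\<^bsub>A\<^esub> w) = (\<iota> u \<otimes>\<^bsub>Q\<^esub> (inv\<^bsub>Q\<^esub> (\<iota> u) \<otimes>\<^bsub>Q\<^esub> \<iota> b)) \<otimes>\<^bsub>Q\<^esub> \<iota> w"
    using wA b closed unit by (simp flip: Q.m_assoc)
  also have "\<dots> = (\<iota> u \<otimes>\<^bsub>Q\<^esub> \<iota> c) \<otimes>\<^bsub>Q\<^esub> (inv\<^bsub>Q\<^esub> (\<iota> w) \<otimes>\<^bsub>Q\<^esub> \<iota> w)"
    using closed by (simp add: q Q.m_assoc)
  also have "\<dots> = \<iota> (u \<otimes>\<^bsub>A\<^esub> c)"
    using closed wu c u by simp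
  finally have "b \<otimes>\<^bsub>A\<^esub> w = u \<otimes>\<^bsub>A\<^esub> c"
    using inj_onD[OF inj] wA b c u by simp
  then show ?thesis using w c by blast
qed

lemma reg_left_Ore_if_left_fractions:
  assumes T0: "T0 \<subseteq> T" and T: "mult_set A T" and units: "\<iota> ` T \<subseteq> Units Q"
    and fractions: "left_fractions A T0 Q \<iota>"
  shows "reg_left_Ore A T"
  unfolding reg_left_Ore_def
proof (intro conjI ballI)
  have TA: "T \<subseteq> carrier A" using T by (simp add: mult_set_def)
  show "mult_set A T" by (rule T)
  show "regular A u" if "u \<in> T" for u
    using that TA units by (intro regular_if_Units_image) auto
  fix a u assume a: "a \<in> carrier A" and u: "u \<in> T"
  obtain t' a' where "t' \<in> T0" "a' \<in> carrier A" "t' \<otimes>\<^bsub>A\<^esub> a = a' \<otimes>\<^bsub>A\<^esub> u"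
    using left_Ore_condition_if_left_fractions[OF _ _ fractions a] T0 TA units u by blast
  then show "\<exists>t'\<in>T. \<exists>a'\<in>carrier A. t' \<otimes>\<^bsub>A\<^esub> a = a' \<otimes>\<^bsub>A\<^esub> u" using T0 by blast
qed

lemma reg_right_Ore_if_right_fractions:
  assumes T0: "T0 \<subseteq> T" and T: "mult_set A T" and units: "\<iota> ` T \<subseteq> Units Q"
    and fractions: "right_fractions A T0 Q \<iota>"
  shows "reg_right_Ore A T"
  unfolding reg_right_Ore_def
proof (intro conjI ballI)
  have TA: "T \<subseteq> carrier A" using T by (simp add: mult_set_def)
  show "mult_set A T" by (rule T)
  show "regular A u" if "u \<in> T" for u
    using that TA units by (intro regular_if_Units_image) auto
  fix a u assume a: "a \<in> carrier A" and u: "u \<in> T"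
  obtain t' a' where "t' \<in> T0" "a' \<in> carrier A" "a \<otimes>\<^bsub>A\<^esub> t' = u \<otimes>\<^bsub>A\<^esub> a'"
    using right_Ore_condition_if_right_fractions[OF _ _ fractions a] T0 TA units u by blast
  then show "\<exists>t'\<in>T. \<exists>a'\<in>carrier A. a \<otimes>\<^bsub>A\<^esub> t' = u \<otimes>\<^bsub>A\<^esub> a'" using T0 by blast
qed

end

section \<open>Localization at a multiplicative set\<close>

lemma fr_a_inv:
  assumes "f \<in> carrier (free_ring A S)"
  shows "\<ominus>\<^bsub>free_ring A S\<^esub> f = (\<lambda>w. - f w)"
proof -
  interpret ring "free_ring A S" by (rule ring_free_ring)
  show ?thesis
    by (rule minus_equality) (use assms in \<open>auto simp: free_ring_simps neg_closed_fr\<close>)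
qed

lemma fr_minus:
  assumes "f \<in> carrier (free_ring A S)" "g \<in> carrier (free_ring A S)"
  shows "f \<ominus>\<^bsub>free_ring A S\<^esub> g = (\<lambda>w. f w - g w)"
  using fr_a_inv[OF assms(2)] by (simp add: a_minus_def free_ring_simps)

locale localization = R: ring R for R :: "('a, 'm) ring_scheme" +
  fixes S :: "'a set"
  assumes S_subset: "S \<subseteq> carrier R"
begin

abbreviation "FR \<equiv> free_ring (carrier R) S"
abbreviation "I \<equiv> loc_ideal R S"
abbreviation "L \<equiv> loc R S"
abbreviation "cls \<equiv> (\<lambda>f. I +>\<^bsub>FR\<^esub> f)"
abbreviation "\<sigma> \<equiv> loc_map R S"
abbreviation "\<xi> \<equiv> loc_var R S"

sublocale F: ring FR by (rule ring_free_ring)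

lemma S_carrier: "s \<in> S \<Longrightarrow> s \<in> carrier R"
  using S_subset by blast

lemma letter_closed: "r \<in> carrier R \<Longrightarrow> mon [Inl r] \<in> carrier FR"
  by (simp add: free_ring_simps mon_closed)

lemma var_closed: "s \<in> S \<Longrightarrow> mon [Inr s] \<in> carrier FR"
  by (simp add: free_ring_simps mon_closed)

lemma loc_rels_subset_carrier: "loc_rels R S \<subseteq> carrier FR"
  using S_subset unfolding loc_rels_def
  by (auto simp: free_ring_simps intro!: diff_closed_fr mon_closed) blast+

lemma loc_ideal_ideal: "ideal I FR"
  unfolding loc_ideal_def by (rule F.genideal_ideal[OF loc_rels_subset_carrier])

lemma loc_rels_subset_ideal: "loc_rels R S \<subseteq> I"
  unfolding loc_ideal_def by (rule F.genideal_self[OF loc_rels_subset_carrier])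

sublocale L: ring L
  unfolding loc_def by (rule ideal.quotient_is_ring[OF loc_ideal_ideal])

lemma cls_hom: "cls \<in> ring_hom FR L"
  unfolding loc_def by (rule ideal.rcos_ring_hom[OF loc_ideal_ideal])

lemma carrier_loc: "carrier L = cls ` carrier FR"
  by (auto simp: loc_def FactRing_def A_RCOSETS_def')

lemma cls_one: "cls (mon []) = \<one>\<^bsub>L\<^esub>"
  using ring_hom_one[OF cls_hom] by (simp add: free_ring_simps)

lemma cls_append:
  assumes "mon u \<in> carrier FR" "mon v \<in> carrier FR"
  shows "cls (mon (u @ v)) = cls (mon u) \<otimes>\<^bsub>L\<^esub> cls (mon v)"
proof -
  have "mon (u @ v) = mon u \<otimes>\<^bsub>FR\<^esub> mon v" by (simp add: free_ring_simps conv_mon)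
  then show ?thesis using ring_hom_mult[OF cls_hom assms] by simp
qed

lemma cls_eq_if_minus_in_ideal:
  assumes "f \<in> carrier FR" "g \<in> carrier FR" "(\<lambda>w. f w - g w) \<in> I"
  shows "cls f = cls g"
  using assms F.quotient_eq_iff_same_a_r_cos[OF loc_ideal_ideal assms(1,2)] fr_minus[OF assms(1,2)]
  by simp

lemma cls_eq_if_rel:
  assumes "(\<lambda>w. mon u w - mon v w) \<in> loc_rels R S" "mon u \<in> carrier FR" "mon v \<in> carrier FR"
  shows "cls (mon u) = cls (mon v)"
  using assms loc_rels_subset_ideal by (intro cls_eq_if_minus_in_ideal) auto

lemma loc_map_hom: "\<sigma> \<in> ring_hom R L"
proof (rule ring_hom_memI)
  fix a b assume a: "a \<in> carrier R" and b: "b \<in> carrier R"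
  then have ab: "mon [Inl a] \<in> carrier FR" "mon [Inl b] \<in> carrier FR"
    by (simp_all add: letter_closed)
  show "\<sigma> a \<in> carrier L"
    using ring_hom_closed[OF cls_hom ab(1)] by (simp add: loc_map_def)
  have "(\<lambda>w. mon [Inl (a \<otimes>\<^bsub>R\<^esub> b)] w - mon [Inl a, Inl b] w) \<in> loc_rels R S"
    unfolding loc_rels_def using a b by blast
  then have "cls (mon [Inl (a \<otimes>\<^bsub>R\<^esub> b)]) = cls (mon [Inl a, Inl b])"
    using a b by (intro cls_eq_if_rel) (auto simp: free_ring_simps intro!: mon_closed)
  then show "\<sigma> (a \<otimes>\<^bsub>R\<^esub> b) = \<sigma> a \<otimes>\<^bsub>L\<^esub> \<sigma> b"
    using cls_append[OF ab] by (simp add: loc_map_def)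
  have "(\<lambda>w. mon [Inl (a \<oplus>\<^bsub>R\<^esub> b)] w - mon [Inl a] w - mon [Inl b] w) \<in> loc_rels R S"
    unfolding loc_rels_def using a b by (intro UnI1) blast
  moreover have "(\<lambda>w. mon [Inl (a \<oplus>\<^bsub>R\<^esub> b)] w - mon [Inl a] w - mon [Inl b] w)
      = (\<lambda>w. mon [Inl (a \<oplus>\<^bsub>R\<^esub> b)] w - (mon [Inl a] \<oplus>\<^bsub>FR\<^esub> mon [Inl b]) w)"
    by (simp add: free_ring_simps diff_diff_eq)
  ultimately have "cls (mon [Inl (a \<oplus>\<^bsub>R\<^esub> b)]) = cls (mon [Inl a] \<oplus>\<^bsub>FR\<^esub> mon [Inl b])"
    using loc_rels_subset_ideal letter_closed[OF R.add.m_closed[OF a b]] ab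
    by (intro cls_eq_if_minus_in_ideal) auto
  then show "\<sigma> (a \<oplus>\<^bsub>R\<^esub> b) = \<sigma> a \<oplus>\<^bsub>L\<^esub> \<sigma> b"
    using ring_hom_add[OF cls_hom ab] by (simp add: loc_map_def)
next
  have "(\<lambda>w. mon [Inl \<one>\<^bsub>R\<^esub>] w - mon [] w) \<in> loc_rels R S"
    unfolding loc_rels_def by blast
  then have "cls (mon [Inl \<one>\<^bsub>R\<^esub>]) = cls (mon [])"
    by (intro cls_eq_if_rel) (auto simp: letter_closed free_ring_simps intro!: mon_closed)
  then show "\<sigma> \<one>\<^bsub>R\<^esub> = \<one>\<^bsub>L\<^esub>"
    by (simp add: loc_map_def cls_one)
qed

sublocale \<sigma>: ring_hom_ring R L \<sigma>
  by (rule ring_hom_ringI2[OF R.ring_axioms L.ring_axioms loc_map_hom])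

lemma loc_var_closed: "s \<in> S \<Longrightarrow> \<xi> s \<in> carrier L"
  using ring_hom_closed[OF cls_hom var_closed] by (simp add: loc_var_def)

lemma loc_map_S_closed: "s \<in> S \<Longrightarrow> \<sigma> s \<in> carrier L"
  using S_subset by (intro \<sigma>.hom_closed) auto

lemma loc_map_loc_var: "s \<in> S \<Longrightarrow> \<sigma> s \<otimes>\<^bsub>L\<^esub> \<xi> s = \<one>\<^bsub>L\<^esub>"
proof -
  assume s: "s \<in> S"
  then have w: "mon [Inl s] \<in> carrier FR" "mon [Inr s] \<in> carrier FR"
    using S_subset by (auto simp: letter_closed var_closed)
  have "(\<lambda>w. mon [Inl s, Inr s] w - mon [] w) \<in> loc_rels R S"
    using s unfolding loc_rels_def by auto
  then have "cls (mon [Inl s, Inr s]) = cls (mon [])"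
    using s S_subset by (intro cls_eq_if_rel) (auto simp: free_ring_simps intro!: mon_closed imageI)
  then show ?thesis using cls_append[OF w] by (simp add: loc_map_def loc_var_def cls_one)
qed

lemma loc_var_loc_map: "s \<in> S \<Longrightarrow> \<xi> s \<otimes>\<^bsub>L\<^esub> \<sigma> s = \<one>\<^bsub>L\<^esub>"
proof -
  assume s: "s \<in> S"
  then have w: "mon [Inl s] \<in> carrier FR" "mon [Inr s] \<in> carrier FR"
    using S_subset by (auto simp: letter_closed var_closed)
  have "(\<lambda>w. mon [Inr s, Inl s] w - mon [] w) \<in> loc_rels R S"
    using s unfolding loc_rels_def by auto
  then have "cls (mon [Inr s, Inl s]) = cls (mon [])"
    using s S_subset by (intro cls_eq_if_rel) (auto simp: free_ring_simps intro!: mon_closed imageI)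
  then show ?thesis using cls_append[OF w(2,1)] by (simp add: loc_map_def loc_var_def cls_one)
qed

lemma loc_map_Units: "s \<in> S \<Longrightarrow> \<sigma> s \<in> Units L"
  unfolding Units_def using loc_map_S_closed loc_var_closed loc_map_loc_var loc_var_loc_map by blast

lemma inv_loc_map: "s \<in> S \<Longrightarrow> inv\<^bsub>L\<^esub> (\<sigma> s) = \<xi> s"
  using L.inv_unique'[OF loc_map_S_closed loc_var_closed loc_map_loc_var loc_var_loc_map] by simp

lemma ass_eq_kernel: "ass R S = a_kernel R L \<sigma>"
  unfolding ass_def a_kernel_def' by (rule refl)

lemma loc_ideal_subset_kernel:
  assumes "ring_hom_ring FR Q h" "loc_rels R S \<subseteq> a_kernel FR Q h"
  shows "I \<subseteq> a_kernel FR Q h"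
  unfolding loc_ideal_def
  by (rule F.genideal_minimal[OF ring_hom_ring.kernel_is_ideal[OF assms(1)] assms(2)])

lemma loc_lift:
  assumes f: "ring_hom_ring R Q f" and units: "\<And>s. s \<in> S \<Longrightarrow> f s \<in> Units Q"
  shows "\<exists>\<phi>. \<phi> \<in> ring_hom L Q \<and> (\<forall>r\<in>carrier R. \<phi> (\<sigma> r) = f r)"
proof -
  interpret f: ring_hom_ring R Q f by (rule f)
  \<comment> \<open>letters outside R and S are sent to zero, so that every word evaluates inside Q\<close>
  define el where "el a = (if a \<in> carrier R then f a else \<zero>\<^bsub>Q\<^esub>)" for a
  define er where "er s = (if s \<in> S then inv\<^bsub>Q\<^esub> (f s) else \<zero>\<^bsub>Q\<^esub>)" for s
  interpret E: free_ring_eval Q el er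
    by unfold_locales (auto simp: el_def er_def units)
  have ev_hom: "ring_hom_ring FR Q (fr_eval Q el er)"
    by (rule ring_hom_ringI2[OF F.ring_axioms f.S.ring_axioms E.fr_eval_hom])
  have "loc_rels R S \<subseteq> a_kernel FR Q (fr_eval Q el er)"
  proof
    fix g assume g: "g \<in> loc_rels R S"
    have "fr_eval Q el er g = \<zero>\<^bsub>Q\<^esub>"
    proof (rule E.fr_eval_loc_rels[OF _ _ _ _ g])
      fix s assume "s \<in> S"
      then show "el s \<otimes>\<^bsub>Q\<^esub> er s = \<one>\<^bsub>Q\<^esub> \<and> er s \<otimes>\<^bsub>Q\<^esub> el s = \<one>\<^bsub>Q\<^esub>"
        using units S_subset by (auto simp: el_def er_def)
    qed (simp_all add: el_def)
    then show "g \<in> a_kernel FR Q (fr_eval Q el er)"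
      using g loc_rels_subset_carrier by (auto simp: a_kernel_def')
  qed
  then have ker: "I \<subseteq> a_kernel FR Q (fr_eval Q el er)"
    by (rule loc_ideal_subset_kernel[OF ev_hom])
  define \<phi> where "\<phi> X = the_elem (fr_eval Q el er ` X)" for X
  have "\<phi> \<in> ring_hom L Q"
    unfolding \<phi>_def loc_def by (rule ring_hom_ring.FactRing_lift(1)[OF ev_hom loc_ideal_ideal ker])
  moreover have "\<phi> (\<sigma> r) = f r" if r: "r \<in> carrier R" for r
    using ring_hom_ring.FactRing_lift(2)[OF ev_hom loc_ideal_ideal ker letter_closed[OF r]] r
    by (simp add: \<phi>_def loc_map_def el_def)
  ultimately show ?thesis by blast
qed

lemma loc_carrier_induct [consumes 1, case_names subset add mult loc_map loc_var]:
  assumes X: "X \<in> carrier L"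
    and subset: "M \<subseteq> carrier L"
    and add_mem: "\<And>a b. a \<in> M \<Longrightarrow> b \<in> M \<Longrightarrow> a \<oplus>\<^bsub>L\<^esub> b \<in> M"
    and mult_mem: "\<And>a b. a \<in> M \<Longrightarrow> b \<in> M \<Longrightarrow> a \<otimes>\<^bsub>L\<^esub> b \<in> M"
    and map_mem: "\<And>r. r \<in> carrier R \<Longrightarrow> \<sigma> r \<in> M"
    and var_mem: "\<And>s. s \<in> S \<Longrightarrow> \<xi> s \<in> M"
  shows "X \<in> M"
proof -
  interpret cls: ring_hom_ring FR L cls
    by (rule ring_hom_ringI2[OF F.ring_axioms L.ring_axioms cls_hom])
  obtain f where f: "f \<in> fr_carrier (carrier R) S" and X_eq: "X = cls f"
    using X by (auto simp: carrier_loc free_ring_simps)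
  have neg_mem: "\<ominus>\<^bsub>L\<^esub> a \<in> M" if "a \<in> M" for a
  proof -
    have "\<ominus>\<^bsub>L\<^esub> a = \<sigma> (\<ominus>\<^bsub>R\<^esub> \<one>\<^bsub>R\<^esub>) \<otimes>\<^bsub>L\<^esub> a"
      using that subset L.l_minus[of "\<one>\<^bsub>L\<^esub>" a] by auto
    then show ?thesis using mult_mem[OF map_mem[of "\<ominus>\<^bsub>R\<^esub> \<one>\<^bsub>R\<^esub>"] that] by simp
  qed
  from f have "cls f \<in> M"
  proof (induction rule: fr_carrier_induct)
    case zero
    have "cls (\<lambda>w. 0) = \<sigma> \<zero>\<^bsub>R\<^esub>"
      using cls.hom_zero by (simp add: free_ring_simps)
    then show ?case using map_mem[OF R.zero_closed] by simp
  next
    case (add f g)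
    then show ?case using cls.hom_add[of f g] add_mem
      by (simp add: free_ring_simps)
  next
    case (neg f)
    then show ?case using cls.hom_a_inv[of f] fr_a_inv[of f] neg_mem by (simp add: free_ring_simps)
  next
    case (mult f g)
    then show ?case using cls.hom_mult[of f g] mult_mem
      by (simp add: free_ring_simps)
  next
    case one
    then show ?case using map_mem[OF R.one_closed] by (simp add: cls_one)
  next
    case (letter a)
    then show ?case using map_mem by (simp add: loc_map_def)
  next
    case (var s)
    then show ?case using var_mem by (simp add: loc_var_def)
  qed
  then show ?thesis using X_eq by simp
qed

lemma loc_var_mult:
  assumes s: "s \<in> S" and t: "t \<in> S" and ts: "t \<otimes>\<^bsub>R\<^esub> s \<in> S"
  shows "\<xi> s \<otimes>\<^bsub>L\<^esub> \<xi> t = \<xi> (t \<otimes>\<^bsub>R\<^esub> s)"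
proof -
  have closed: "\<sigma> s \<in> carrier L" "\<sigma> t \<in> carrier L" "\<xi> s \<in> carrier L" "\<xi> t \<in> carrier L"
    using s t by (simp_all add: loc_map_S_closed loc_var_closed)
  have sigma_ts: "\<sigma> (t \<otimes>\<^bsub>R\<^esub> s) = \<sigma> t \<otimes>\<^bsub>L\<^esub> \<sigma> s"
    using s t by (simp add: S_carrier)
  have "\<sigma> (t \<otimes>\<^bsub>R\<^esub> s) \<otimes>\<^bsub>L\<^esub> (\<xi> s \<otimes>\<^bsub>L\<^esub> \<xi> t) = \<sigma> t \<otimes>\<^bsub>L\<^esub> ((\<sigma> s \<otimes>\<^bsub>L\<^esub> \<xi> s) \<otimes>\<^bsub>L\<^esub> \<xi> t)"
    using closed by (simp add: sigma_ts L.m_assoc)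
  also have "\<dots> = \<one>\<^bsub>L\<^esub>"
    using closed s t by (simp add: loc_map_loc_var)
  finally have right: "\<sigma> (t \<otimes>\<^bsub>R\<^esub> s) \<otimes>\<^bsub>L\<^esub> (\<xi> s \<otimes>\<^bsub>L\<^esub> \<xi> t) = \<one>\<^bsub>L\<^esub>" .
  have "(\<xi> s \<otimes>\<^bsub>L\<^esub> \<xi> t) \<otimes>\<^bsub>L\<^esub> \<sigma> (t \<otimes>\<^bsub>R\<^esub> s) = \<xi> s \<otimes>\<^bsub>L\<^esub> ((\<xi> t \<otimes>\<^bsub>L\<^esub> \<sigma> t) \<otimes>\<^bsub>L\<^esub> \<sigma> s)"
    using closed by (simp add: sigma_ts L.m_assoc)
  also have "\<dots> = \<one>\<^bsub>L\<^esub>"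
    using closed s t by (simp add: loc_var_loc_map)
  finally have left: "(\<xi> s \<otimes>\<^bsub>L\<^esub> \<xi> t) \<otimes>\<^bsub>L\<^esub> \<sigma> (t \<otimes>\<^bsub>R\<^esub> s) = \<one>\<^bsub>L\<^esub>" .
  have "\<xi> s \<otimes>\<^bsub>L\<^esub> \<xi> t = inv\<^bsub>L\<^esub> \<sigma> (t \<otimes>\<^bsub>R\<^esub> s)"
    using closed ts by (intro L.inv_unique'[OF _ _ right left]) (simp_all add: loc_map_S_closed)
  then show ?thesis using inv_loc_map[OF ts] by simp
qed

context
  assumes S_mult: "mult_set R S"
    and left_Ore: "\<And>x s. x \<in> carrier R \<Longrightarrow> s \<in> S \<Longrightarrow>
      \<exists>s'\<in>S. \<exists>r'\<in>carrier R. \<sigma> (s' \<otimes>\<^bsub>R\<^esub> x) = \<sigma> (r' \<otimes>\<^bsub>R\<^esub> s)"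
begin

lemma left_Ore_swap:
  assumes x: "x \<in> carrier R" and s: "s \<in> S"
  obtains s' r' where "s' \<in> S" "r' \<in> carrier R" "\<sigma> x \<otimes>\<^bsub>L\<^esub> \<xi> s = \<xi> s' \<otimes>\<^bsub>L\<^esub> \<sigma> r'"
proof -
  obtain s' r' where s': "s' \<in> S" and r': "r' \<in> carrier R"
    and eq: "\<sigma> (s' \<otimes>\<^bsub>R\<^esub> x) = \<sigma> (r' \<otimes>\<^bsub>R\<^esub> s)"
    using left_Ore[OF x s] by blast
  note closed = loc_var_closed[OF s] loc_var_closed[OF s'] \<sigma>.hom_closed[OF x] \<sigma>.hom_closed[OF r']
    loc_map_S_closed[OF s] loc_map_S_closed[OF s']
  have "\<sigma> x \<otimes>\<^bsub>L\<^esub> \<xi> s = (\<xi> s' \<otimes>\<^bsub>L\<^esub> \<sigma> s') \<otimes>\<^bsub>L\<^esub> (\<sigma> x \<otimes>\<^bsub>L\<^esub> \<xi> s)"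
    using closed by (simp add: loc_var_loc_map[OF s'])
  also have "\<dots> = \<xi> s' \<otimes>\<^bsub>L\<^esub> (\<sigma> (s' \<otimes>\<^bsub>R\<^esub> x) \<otimes>\<^bsub>L\<^esub> \<xi> s)"
    using closed s' x by (simp add: S_carrier L.m_assoc)
  also have "\<dots> = \<xi> s' \<otimes>\<^bsub>L\<^esub> (\<sigma> r' \<otimes>\<^bsub>L\<^esub> (\<sigma> s \<otimes>\<^bsub>L\<^esub> \<xi> s))"
    using closed s r' by (simp add: eq S_carrier L.m_assoc)
  also have "\<dots> = \<xi> s' \<otimes>\<^bsub>L\<^esub> \<sigma> r'"
    using closed s by (simp add: loc_map_loc_var)
  finally show ?thesis using that s' r' by blast
qed

lemma left_fraction_mult:
  assumes s: "s \<in> S" and a: "a \<in> carrier R" and u: "u \<in> S" and b: "b \<in> carrier R"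
  shows "\<exists>v\<in>S. \<exists>c\<in>carrier R. (\<xi> s \<otimes>\<^bsub>L\<^esub> \<sigma> a) \<otimes>\<^bsub>L\<^esub> (\<xi> u \<otimes>\<^bsub>L\<^esub> \<sigma> b) = \<xi> v \<otimes>\<^bsub>L\<^esub> \<sigma> c"
proof -
  obtain u' a' where u': "u' \<in> S" and a': "a' \<in> carrier R"
    and swap: "\<sigma> a \<otimes>\<^bsub>L\<^esub> \<xi> u = \<xi> u' \<otimes>\<^bsub>L\<^esub> \<sigma> a'"
    using left_Ore_swap[OF a u] by blast
  have u's: "u' \<otimes>\<^bsub>R\<^esub> s \<in> S" using S_mult s u' by (simp add: mult_set_def)
  note closed = loc_var_closed[OF s] loc_var_closed[OF u] loc_var_closed[OF u']
    \<sigma>.hom_closed[OF a] \<sigma>.hom_closed[OF b] \<sigma>.hom_closed[OF a']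
  have "(\<xi> s \<otimes>\<^bsub>L\<^esub> \<sigma> a) \<otimes>\<^bsub>L\<^esub> (\<xi> u \<otimes>\<^bsub>L\<^esub> \<sigma> b) = \<xi> s \<otimes>\<^bsub>L\<^esub> ((\<sigma> a \<otimes>\<^bsub>L\<^esub> \<xi> u) \<otimes>\<^bsub>L\<^esub> \<sigma> b)"
    using closed by (simp add: L.m_assoc)
  also have "\<dots> = (\<xi> s \<otimes>\<^bsub>L\<^esub> \<xi> u') \<otimes>\<^bsub>L\<^esub> \<sigma> (a' \<otimes>\<^bsub>R\<^esub> b)"
    using closed a' b by (simp add: swap L.m_assoc)
  also have "\<dots> = \<xi> (u' \<otimes>\<^bsub>R\<^esub> s) \<otimes>\<^bsub>L\<^esub> \<sigma> (a' \<otimes>\<^bsub>R\<^esub> b)"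
    by (simp add: loc_var_mult[OF s u' u's])
  finally show ?thesis using u's a' b by blast
qed

lemma left_fraction_common_denominator:
  assumes s: "s \<in> S" and a: "a \<in> carrier R" and u: "u \<in> S" and b: "b \<in> carrier R"
  shows "\<exists>v\<in>S. \<exists>c\<in>carrier R. \<exists>d\<in>carrier R.
    \<xi> s \<otimes>\<^bsub>L\<^esub> \<sigma> a = \<xi> v \<otimes>\<^bsub>L\<^esub> \<sigma> c \<and> \<xi> u \<otimes>\<^bsub>L\<^esub> \<sigma> b = \<xi> v \<otimes>\<^bsub>L\<^esub> \<sigma> d"
proof -
  have uR: "u \<in> carrier R" using u by (rule S_carrier)
  obtain s' r' where s': "s' \<in> S" and r': "r' \<in> carrier R"
    and swap: "\<sigma> u \<otimes>\<^bsub>L\<^esub> \<xi> s = \<xi> s' \<otimes>\<^bsub>L\<^esub> \<sigma> r'"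
    using left_Ore_swap[OF uR s] by blast
  have s'u: "s' \<otimes>\<^bsub>R\<^esub> u \<in> S" using S_mult s' u by (simp add: mult_set_def)
  have s'R: "s' \<in> carrier R" using s' by (rule S_carrier)
  note closed = loc_var_closed[OF s] loc_var_closed[OF u] loc_var_closed[OF s']
    \<sigma>.hom_closed[OF a] \<sigma>.hom_closed[OF b] \<sigma>.hom_closed[OF r'] \<sigma>.hom_closed[OF uR]
    \<sigma>.hom_closed[OF s'R]
  have "\<xi> s \<otimes>\<^bsub>L\<^esub> \<sigma> a = (\<xi> u \<otimes>\<^bsub>L\<^esub> \<sigma> u) \<otimes>\<^bsub>L\<^esub> (\<xi> s \<otimes>\<^bsub>L\<^esub> \<sigma> a)"
    using closed by (simp add: loc_var_loc_map[OF u])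
  also have "\<dots> = \<xi> u \<otimes>\<^bsub>L\<^esub> ((\<sigma> u \<otimes>\<^bsub>L\<^esub> \<xi> s) \<otimes>\<^bsub>L\<^esub> \<sigma> a)"
    using closed by (simp add: L.m_assoc)
  also have "\<dots> = (\<xi> u \<otimes>\<^bsub>L\<^esub> \<xi> s') \<otimes>\<^bsub>L\<^esub> \<sigma> (r' \<otimes>\<^bsub>R\<^esub> a)"
    using closed r' a by (simp add: swap L.m_assoc)
  finally have first: "\<xi> s \<otimes>\<^bsub>L\<^esub> \<sigma> a = \<xi> (s' \<otimes>\<^bsub>R\<^esub> u) \<otimes>\<^bsub>L\<^esub> \<sigma> (r' \<otimes>\<^bsub>R\<^esub> a)"
    by (simp add: loc_var_mult[OF u s' s'u])
  have "\<xi> u \<otimes>\<^bsub>L\<^esub> \<sigma> b = \<xi> u \<otimes>\<^bsub>L\<^esub> ((\<xi> s' \<otimes>\<^bsub>L\<^esub> \<sigma> s') \<otimes>\<^bsub>L\<^esub> \<sigma> b)"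
    using closed by (simp add: loc_var_loc_map[OF s'])
  also have "\<dots> = (\<xi> u \<otimes>\<^bsub>L\<^esub> \<xi> s') \<otimes>\<^bsub>L\<^esub> \<sigma> (s' \<otimes>\<^bsub>R\<^esub> b)"
    using closed s'R b by (simp add: L.m_assoc)
  finally have second: "\<xi> u \<otimes>\<^bsub>L\<^esub> \<sigma> b = \<xi> (s' \<otimes>\<^bsub>R\<^esub> u) \<otimes>\<^bsub>L\<^esub> \<sigma> (s' \<otimes>\<^bsub>R\<^esub> b)"
    by (simp add: loc_var_mult[OF u s' s'u])
  show ?thesis using first second s'u r' a s'R b by blast
qed

lemma left_fractions_if_Ore: "left_fractions R S L \<sigma>"
proof -
  let ?M = "{\<xi> s \<otimes>\<^bsub>L\<^esub> \<sigma> r | s r. s \<in> S \<and> r \<in> carrier R}"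
  have one: "\<one>\<^bsub>R\<^esub> \<in> S" using S_mult by (simp add: mult_set_def)
  have "X \<in> ?M" if X: "X \<in> carrier L" for X
    using X
  proof (induction rule: loc_carrier_induct)
    case subset
    show ?case using loc_var_closed by auto
  next
    case (add X Y)
    then obtain s a u b where "s \<in> S" "a \<in> carrier R" "u \<in> S" "b \<in> carrier R"
      and XY: "X = \<xi> s \<otimes>\<^bsub>L\<^esub> \<sigma> a" "Y = \<xi> u \<otimes>\<^bsub>L\<^esub> \<sigma> b" by blast
    then obtain v c d where v: "v \<in> S" "c \<in> carrier R" "d \<in> carrier R"
      and "X = \<xi> v \<otimes>\<^bsub>L\<^esub> \<sigma> c" "Y = \<xi> v \<otimes>\<^bsub>L\<^esub> \<sigma> d"
      using left_fraction_common_denominator by metis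
    then have "X \<oplus>\<^bsub>L\<^esub> Y = \<xi> v \<otimes>\<^bsub>L\<^esub> \<sigma> (c \<oplus>\<^bsub>R\<^esub> d)"
      by (simp add: L.r_distr loc_var_closed)
    then show ?case using v by blast
  next
    case (mult X Y)
    then show ?case using left_fraction_mult by blast
  next
    case (loc_map r)
    have "\<sigma> r = \<xi> \<one>\<^bsub>R\<^esub> \<otimes>\<^bsub>L\<^esub> \<sigma> r"
      using loc_var_loc_map[OF one] loc_map by (simp add: flip: inv_loc_map[OF one])
    then show ?case using one loc_map by blast
  next
    case (loc_var s)
    have "\<xi> s = \<xi> s \<otimes>\<^bsub>L\<^esub> \<sigma> \<one>\<^bsub>R\<^esub>" using loc_var loc_var_closed by simp
    then show ?case using loc_var by blast
  qed
  then show ?thesis unfolding left_fractions_def using inv_loc_map by fastforce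
qed

end

context
  assumes S_mult: "mult_set R S"
    and right_Ore: "\<And>x s. x \<in> carrier R \<Longrightarrow> s \<in> S \<Longrightarrow>
      \<exists>s'\<in>S. \<exists>r'\<in>carrier R. \<sigma> (x \<otimes>\<^bsub>R\<^esub> s') = \<sigma> (s \<otimes>\<^bsub>R\<^esub> r')"
begin

lemma right_Ore_swap:
  assumes x: "x \<in> carrier R" and s: "s \<in> S"
  obtains s' r' where "s' \<in> S" "r' \<in> carrier R" "\<xi> s \<otimes>\<^bsub>L\<^esub> \<sigma> x = \<sigma> r' \<otimes>\<^bsub>L\<^esub> \<xi> s'"
proof -
  obtain s' r' where s': "s' \<in> S" and r': "r' \<in> carrier R"
    and eq: "\<sigma> (x \<otimes>\<^bsub>R\<^esub> s') = \<sigma> (s \<otimes>\<^bsub>R\<^esub> r')"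
    using right_Ore[OF x s] by blast
  note closed = loc_var_closed[OF s] loc_var_closed[OF s'] \<sigma>.hom_closed[OF x] \<sigma>.hom_closed[OF r']
    loc_map_S_closed[OF s] loc_map_S_closed[OF s']
  have "\<xi> s \<otimes>\<^bsub>L\<^esub> \<sigma> x = (\<xi> s \<otimes>\<^bsub>L\<^esub> \<sigma> x) \<otimes>\<^bsub>L\<^esub> (\<sigma> s' \<otimes>\<^bsub>L\<^esub> \<xi> s')"
    using closed by (simp add: loc_map_loc_var[OF s'])
  also have "\<dots> = \<xi> s \<otimes>\<^bsub>L\<^esub> (\<sigma> (x \<otimes>\<^bsub>R\<^esub> s') \<otimes>\<^bsub>L\<^esub> \<xi> s')"
    using closed s' x by (simp add: S_carrier L.m_assoc)
  also have "\<dots> = (\<xi> s \<otimes>\<^bsub>L\<^esub> \<sigma> s) \<otimes>\<^bsub>L\<^esub> (\<sigma> r' \<otimes>\<^bsub>L\<^esub> \<xi> s')"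
    using closed s r' by (simp add: eq S_carrier L.m_assoc)
  also have "\<dots> = \<sigma> r' \<otimes>\<^bsub>L\<^esub> \<xi> s'"
    using closed s by (simp add: loc_var_loc_map)
  finally show ?thesis using that s' r' by blast
qed

lemma right_fraction_mult:
  assumes s: "s \<in> S" and a: "a \<in> carrier R" and u: "u \<in> S" and b: "b \<in> carrier R"
  shows "\<exists>v\<in>S. \<exists>c\<in>carrier R. (\<sigma> a \<otimes>\<^bsub>L\<^esub> \<xi> s) \<otimes>\<^bsub>L\<^esub> (\<sigma> b \<otimes>\<^bsub>L\<^esub> \<xi> u) = \<sigma> c \<otimes>\<^bsub>L\<^esub> \<xi> v"
proof -
  obtain s' b' where s': "s' \<in> S" and b': "b' \<in> carrier R"
    and swap: "\<xi> s \<otimes>\<^bsub>L\<^esub> \<sigma> b = \<sigma> b' \<otimes>\<^bsub>L\<^esub> \<xi> s'"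
    using right_Ore_swap[OF b s] by blast
  have us': "u \<otimes>\<^bsub>R\<^esub> s' \<in> S" using S_mult s' u by (simp add: mult_set_def)
  note closed = loc_var_closed[OF s] loc_var_closed[OF u] loc_var_closed[OF s']
    \<sigma>.hom_closed[OF a] \<sigma>.hom_closed[OF b] \<sigma>.hom_closed[OF b']
  have "(\<sigma> a \<otimes>\<^bsub>L\<^esub> \<xi> s) \<otimes>\<^bsub>L\<^esub> (\<sigma> b \<otimes>\<^bsub>L\<^esub> \<xi> u) = \<sigma> a \<otimes>\<^bsub>L\<^esub> ((\<xi> s \<otimes>\<^bsub>L\<^esub> \<sigma> b) \<otimes>\<^bsub>L\<^esub> \<xi> u)"
    using closed by (simp add: L.m_assoc)
  also have "\<dots> = \<sigma> (a \<otimes>\<^bsub>R\<^esub> b') \<otimes>\<^bsub>L\<^esub> (\<xi> s' \<otimes>\<^bsub>L\<^esub> \<xi> u)"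
    using closed a b' by (simp add: swap L.m_assoc)
  also have "\<dots> = \<sigma> (a \<otimes>\<^bsub>R\<^esub> b') \<otimes>\<^bsub>L\<^esub> \<xi> (u \<otimes>\<^bsub>R\<^esub> s')"
    by (simp add: loc_var_mult[OF s' u us'])
  finally show ?thesis using us' a b' by blast
qed

lemma right_fraction_common_denominator:
  assumes s: "s \<in> S" and a: "a \<in> carrier R" and u: "u \<in> S" and b: "b \<in> carrier R"
  shows "\<exists>v\<in>S. \<exists>c\<in>carrier R. \<exists>d\<in>carrier R.
    \<sigma> a \<otimes>\<^bsub>L\<^esub> \<xi> s = \<sigma> c \<otimes>\<^bsub>L\<^esub> \<xi> v \<and> \<sigma> b \<otimes>\<^bsub>L\<^esub> \<xi> u = \<sigma> d \<otimes>\<^bsub>L\<^esub> \<xi> v"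
proof -
  have uR: "u \<in> carrier R" using u by (rule S_carrier)
  obtain s' r' where s': "s' \<in> S" and r': "r' \<in> carrier R"
    and swap: "\<xi> s \<otimes>\<^bsub>L\<^esub> \<sigma> u = \<sigma> r' \<otimes>\<^bsub>L\<^esub> \<xi> s'"
    using right_Ore_swap[OF uR s] by blast
  have us': "u \<otimes>\<^bsub>R\<^esub> s' \<in> S" using S_mult s' u by (simp add: mult_set_def)
  have s'R: "s' \<in> carrier R" using s' by (rule S_carrier)
  note closed = loc_var_closed[OF s] loc_var_closed[OF u] loc_var_closed[OF s']
    \<sigma>.hom_closed[OF a] \<sigma>.hom_closed[OF b] \<sigma>.hom_closed[OF r'] \<sigma>.hom_closed[OF uR]
    \<sigma>.hom_closed[OF s'R]
  have "\<sigma> a \<otimes>\<^bsub>L\<^esub> \<xi> s = (\<sigma> a \<otimes>\<^bsub>L\<^esub> \<xi> s) \<otimes>\<^bsub>L\<^esub> (\<sigma> u \<otimes>\<^bsub>L\<^esub> \<xi> u)"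
    using closed by (simp add: loc_map_loc_var[OF u])
  also have "\<dots> = \<sigma> a \<otimes>\<^bsub>L\<^esub> ((\<xi> s \<otimes>\<^bsub>L\<^esub> \<sigma> u) \<otimes>\<^bsub>L\<^esub> \<xi> u)"
    using closed by (simp add: L.m_assoc)
  also have "\<dots> = \<sigma> (a \<otimes>\<^bsub>R\<^esub> r') \<otimes>\<^bsub>L\<^esub> (\<xi> s' \<otimes>\<^bsub>L\<^esub> \<xi> u)"
    using closed r' a by (simp add: swap L.m_assoc)
  finally have first: "\<sigma> a \<otimes>\<^bsub>L\<^esub> \<xi> s = \<sigma> (a \<otimes>\<^bsub>R\<^esub> r') \<otimes>\<^bsub>L\<^esub> \<xi> (u \<otimes>\<^bsub>R\<^esub> s')"
    by (simp add: loc_var_mult[OF s' u us'])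
  have "\<sigma> b \<otimes>\<^bsub>L\<^esub> \<xi> u = (\<sigma> b \<otimes>\<^bsub>L\<^esub> (\<sigma> s' \<otimes>\<^bsub>L\<^esub> \<xi> s')) \<otimes>\<^bsub>L\<^esub> \<xi> u"
    using closed by (simp add: loc_map_loc_var[OF s'])
  also have "\<dots> = \<sigma> (b \<otimes>\<^bsub>R\<^esub> s') \<otimes>\<^bsub>L\<^esub> (\<xi> s' \<otimes>\<^bsub>L\<^esub> \<xi> u)"
    using closed s'R b by (simp add: L.m_assoc)
  finally have second: "\<sigma> b \<otimes>\<^bsub>L\<^esub> \<xi> u = \<sigma> (b \<otimes>\<^bsub>R\<^esub> s') \<otimes>\<^bsub>L\<^esub> \<xi> (u \<otimes>\<^bsub>R\<^esub> s')"
    by (simp add: loc_var_mult[OF s' u us'])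
  show ?thesis using first second us' r' a s'R b by blast
qed

lemma right_fractions_if_Ore: "right_fractions R S L \<sigma>"
proof -
  let ?M = "{\<sigma> r \<otimes>\<^bsub>L\<^esub> \<xi> s | s r. s \<in> S \<and> r \<in> carrier R}"
  have one: "\<one>\<^bsub>R\<^esub> \<in> S" using S_mult by (simp add: mult_set_def)
  have "X \<in> ?M" if X: "X \<in> carrier L" for X
    using X
  proof (induction rule: loc_carrier_induct)
    case subset
    show ?case using loc_var_closed by auto
  next
    case (add X Y)
    then obtain s a u b where "s \<in> S" "a \<in> carrier R" "u \<in> S" "b \<in> carrier R"
      and XY: "X = \<sigma> a \<otimes>\<^bsub>L\<^esub> \<xi> s" "Y = \<sigma> b \<otimes>\<^bsub>L\<^esub> \<xi> u" by blast
    then obtain v c d where v: "v \<in> S" "c \<in> carrier R" "d \<in> carrier R"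
      and "X = \<sigma> c \<otimes>\<^bsub>L\<^esub> \<xi> v" "Y = \<sigma> d \<otimes>\<^bsub>L\<^esub> \<xi> v"
      using right_fraction_common_denominator by metis
    then have "X \<oplus>\<^bsub>L\<^esub> Y = \<sigma> (c \<oplus>\<^bsub>R\<^esub> d) \<otimes>\<^bsub>L\<^esub> \<xi> v"
      by (simp add: L.l_distr loc_var_closed)
    then show ?case using v by blast
  next
    case (mult X Y)
    then show ?case using right_fraction_mult by blast
  next
    case (loc_map r)
    have "\<sigma> r = \<sigma> r \<otimes>\<^bsub>L\<^esub> \<xi> \<one>\<^bsub>R\<^esub>"
      using loc_var_loc_map[OF one] loc_map by (simp add: flip: inv_loc_map[OF one])
    then show ?case using one loc_map by blast
  next
    case (loc_var s)
    have "\<xi> s = \<sigma> \<one>\<^bsub>R\<^esub> \<otimes>\<^bsub>L\<^esub> \<xi> s" using loc_var loc_var_closed by simp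
    then show ?case using loc_var by blast
  qed
  then show ?thesis unfolding right_fractions_def using inv_loc_map by fastforce
qed

end

lemma left_localizable_iff:
  "left_localizable R S \<longleftrightarrow> mult_set R S \<and> \<one>\<^bsub>L\<^esub> \<noteq> \<zero>\<^bsub>L\<^esub> \<and> left_fractions R S L \<sigma>"
  unfolding left_localizable_def left_fractions_def
  by (intro conj_cong refl ball_cong bex_cong) (simp_all add: inv_loc_map)

lemma right_localizable_iff:
  "right_localizable R S \<longleftrightarrow> mult_set R S \<and> \<one>\<^bsub>L\<^esub> \<noteq> \<zero>\<^bsub>L\<^esub> \<and> right_fractions R S L \<sigma>"
  unfolding right_localizable_def right_fractions_def
  by (intro conj_cong refl ball_cong bex_cong) (simp_all add: inv_loc_map)

end

lemma (in localization) loc_hom_inj: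
  assumes \<phi>: "ring_hom_ring L Q \<phi>"
    and fractions: "left_fractions R S L \<sigma> \<or> right_fractions R S L \<sigma>"
    and ker: "\<And>r. r \<in> carrier R \<Longrightarrow> \<phi> (\<sigma> r) = \<zero>\<^bsub>Q\<^esub> \<Longrightarrow> \<sigma> r = \<zero>\<^bsub>L\<^esub>"
  shows "inj_on \<phi> (carrier L)"
proof -
  interpret \<phi>: ring_hom_ring L Q \<phi> by (rule \<phi>)
  have kernel_trivial: "X = \<zero>\<^bsub>L\<^esub>" if X: "X \<in> carrier L" and zero: "\<phi> X = \<zero>\<^bsub>Q\<^esub>" for X
  proof -
    obtain s r where s: "s \<in> S" and r: "r \<in> carrier R"
      and X_eq: "X = inv\<^bsub>L\<^esub> (\<sigma> s) \<otimes>\<^bsub>L\<^esub> \<sigma> r \<or> X = \<sigma> r \<otimes>\<^bsub>L\<^esub> inv\<^bsub>L\<^esub> (\<sigma> s)"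
      using fractions X unfolding left_fractions_def right_fractions_def by blast
    have u: "inv\<^bsub>L\<^esub> (\<sigma> s) \<in> Units L" using loc_map_Units[OF s] by simp
    then have v: "\<phi> (inv\<^bsub>L\<^esub> (\<sigma> s)) \<in> Units Q" by (rule \<phi>.hom_Units_closed)
    have closed: "inv\<^bsub>L\<^esub> (\<sigma> s) \<in> carrier L" "\<sigma> r \<in> carrier L" using u r by auto
    have "\<phi> (inv\<^bsub>L\<^esub> (\<sigma> s)) \<otimes>\<^bsub>Q\<^esub> \<phi> (\<sigma> r) = \<zero>\<^bsub>Q\<^esub> \<or> \<phi> (\<sigma> r) \<otimes>\<^bsub>Q\<^esub> \<phi> (inv\<^bsub>L\<^esub> (\<sigma> s)) = \<zero>\<^bsub>Q\<^esub>"
      using X_eq zero closed by auto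
    then have "\<phi> (\<sigma> r) = \<zero>\<^bsub>Q\<^esub>"
      using \<phi>.S.Units_mult_eq_zero[OF v] closed by auto
    then have "\<sigma> r = \<zero>\<^bsub>L\<^esub>" by (rule ker[OF r])
    then show ?thesis using X_eq closed by auto
  qed
  have "a_kernel L Q \<phi> = {\<zero>\<^bsub>L\<^esub>}"
  proof (intro equalityI subsetI)
    fix X assume "X \<in> a_kernel L Q \<phi>"
    then have "X \<in> carrier L" "\<phi> X = \<zero>\<^bsub>Q\<^esub>" unfolding a_kernel_def' by blast+
    then show "X \<in> {\<zero>\<^bsub>L\<^esub>}" using kernel_trivial by blast
  next
    fix X assume "X \<in> {\<zero>\<^bsub>L\<^esub>}"
    then show "X \<in> a_kernel L Q \<phi>" unfolding a_kernel_def' using \<phi>.hom_zero by blast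
  qed
  then show ?thesis by (rule \<phi>.trivial_ker_imp_inj)
qed

lemma (in localization) loc_hom_surj:
  assumes \<phi>: "ring_hom_ring L Q \<phi>"
    and fractions: "left_fractions R S Q (\<lambda>r. \<phi> (\<sigma> r)) \<or> right_fractions R S Q (\<lambda>r. \<phi> (\<sigma> r))"
  shows "\<phi> ` carrier L = carrier Q"
proof
  interpret \<phi>: ring_hom_ring L Q \<phi> by (rule \<phi>)
  show "\<phi> ` carrier L \<subseteq> carrier Q" by auto
  show "carrier Q \<subseteq> \<phi> ` carrier L"
  proof
    fix q assume "q \<in> carrier Q"
    then obtain s r where s: "s \<in> S" and r: "r \<in> carrier R"
      and q: "q = inv\<^bsub>Q\<^esub> (\<phi> (\<sigma> s)) \<otimes>\<^bsub>Q\<^esub> \<phi> (\<sigma> r) \<or> q = \<phi> (\<sigma> r) \<otimes>\<^bsub>Q\<^esub> inv\<^bsub>Q\<^esub> (\<phi> (\<sigma> s))"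
      using fractions unfolding left_fractions_def right_fractions_def by blast
    have u: "\<sigma> s \<in> Units L" by (rule loc_map_Units[OF s])
    then have "q = \<phi> (inv\<^bsub>L\<^esub> (\<sigma> s) \<otimes>\<^bsub>L\<^esub> \<sigma> r) \<or> q = \<phi> (\<sigma> r \<otimes>\<^bsub>L\<^esub> inv\<^bsub>L\<^esub> (\<sigma> s))"
      using q r by (simp add: \<phi>.hom_inv_Units)
    moreover have "inv\<^bsub>L\<^esub> (\<sigma> s) \<otimes>\<^bsub>L\<^esub> \<sigma> r \<in> carrier L" "\<sigma> r \<otimes>\<^bsub>L\<^esub> inv\<^bsub>L\<^esub> (\<sigma> s) \<in> carrier L"
      using u r by simp_all
    ultimately show "q \<in> \<phi> ` carrier L" by blast
  qed
qed

lemma ass_mono: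
  assumes R: "ring R" and S0: "S0 \<subseteq> S1" and S1: "S1 \<subseteq> carrier R"
  shows "ass R S0 \<subseteq> ass R S1"
proof -
  interpret l0: localization R S0 using R S0 S1 by (simp add: localization_def localization_axioms_def)
  interpret l1: localization R S1 using R S1 by (simp add: localization_def localization_axioms_def)
  obtain \<phi> where \<phi>: "\<phi> \<in> ring_hom (loc R S0) (loc R S1)"
    and \<phi>_loc_map: "\<forall>r\<in>carrier R. \<phi> (loc_map R S0 r) = loc_map R S1 r"
    using l0.loc_lift[OF l1.\<sigma>.ring_hom_ring_axioms] l1.loc_map_Units S0 by blast
  show ?thesis
  proof
    fix r assume "r \<in> ass R S0"
    then have r: "r \<in> carrier R" "loc_map R S0 r = \<zero>\<^bsub>loc R S0\<^esub>" by (auto simp: ass_def)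
    have "loc_map R S1 r = \<phi> (loc_map R S0 r)" using \<phi>_loc_map r(1) by simp
    also have "\<dots> = \<phi> \<zero>\<^bsub>loc R S0\<^esub>" using r by simp
    also have "\<dots> = \<zero>\<^bsub>loc R S1\<^esub>" by (rule ring_hom_zero[OF \<phi> l0.L.ring_axioms l1.L.ring_axioms])
    finally show "r \<in> ass R S1" using r by (simp add: ass_def)
  qed
qed

section \<open>Localizable sets and regular Ore sets\<close>

lemma localizable_iff:
  "localizable t R S \<longleftrightarrow>
    (t \<in> {Lft, Two} \<longrightarrow> left_localizable R S) \<and> (t \<in> {Rgt, Two} \<longrightarrow> right_localizable R S)"
  by (cases t) auto

lemma reg_Ore_iff:
  "reg_Ore t A T \<longleftrightarrow> (t \<in> {Lft, Two} \<longrightarrow> reg_left_Ore A T) \<and> (t \<in> {Rgt, Two} \<longrightarrow> reg_right_Ore A T)"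
  by (cases t) auto

lemma localizable_imp_mult_set: "localizable t R S \<Longrightarrow> mult_set R S"
  by (cases t) (auto simp: left_localizable_def right_localizable_def)

lemma localizable_imp_nontrivial: "localizable t R S \<Longrightarrow> \<one>\<^bsub>loc R S\<^esub> \<noteq> \<zero>\<^bsub>loc R S\<^esub>"
  by (cases t) (auto simp: left_localizable_def right_localizable_def)

lemma reg_Ore_imp_mult_set: "reg_Ore t A T \<Longrightarrow> mult_set A T"
  by (cases t) (auto simp: reg_left_Ore_def reg_right_Ore_def)

lemma S_Ore_regular: "u \<in> S_Ore t A \<Longrightarrow> regular A u"
  by (cases t) (auto simp: S_Ore_def reg_left_Ore_def reg_right_Ore_def)

lemma S_Ore_carrier: "u \<in> S_Ore t A \<Longrightarrow> u \<in> carrier A"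
  using S_Ore_regular[of u t A] unfolding regular_def by simp

lemma reg_Ore_subset_S_Ore: "reg_Ore t A T \<Longrightarrow> T \<subseteq> S_Ore t A"
  by (auto simp: S_Ore_def)

lemma S_Ore_Two_right_Ore:
  assumes "c \<in> carrier A" "w \<in> S_Ore Two A"
  shows "\<exists>w'\<in>S_Ore Two A. \<exists>c'\<in>carrier A. c \<otimes>\<^bsub>A\<^esub> w' = w \<otimes>\<^bsub>A\<^esub> c'"
proof -
  obtain T where T: "reg_Ore Two A T" "w \<in> T" using assms(2) by (auto simp: S_Ore_def)
  then have "reg_right_Ore A T" by simp
  then obtain w' c' where "w' \<in> T" "c' \<in> carrier A" "c \<otimes>\<^bsub>A\<^esub> w' = w \<otimes>\<^bsub>A\<^esub> c'"
    using assms(1) T(2) unfolding reg_right_Ore_def by blast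
  then show ?thesis using T(1) unfolding S_Ore_def by blast
qed

lemma is_Q_D:
  assumes "is_Q t A Q \<iota>"
  shows "ring Q" "\<iota> \<in> ring_hom A Q" "\<iota> ` S_Ore t A \<subseteq> Units Q"
    and "\<And>a. a \<in> carrier A \<Longrightarrow> \<iota> a = \<zero>\<^bsub>Q\<^esub> \<Longrightarrow>
      \<exists>u\<in>S_Ore t A. u \<otimes>\<^bsub>A\<^esub> a = \<zero>\<^bsub>A\<^esub> \<or> a \<otimes>\<^bsub>A\<^esub> u = \<zero>\<^bsub>A\<^esub>"
    and "t \<in> {Lft, Two} \<Longrightarrow> left_fractions A (S_Ore t A) Q \<iota>"
    and "t = Rgt \<Longrightarrow> right_fractions A (S_Ore t A) Q \<iota>"
  using assms
  by (cases t; simp add: is_left_fractions_def is_right_fractions_def left_fractions_def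
      right_fractions_def image_subset_iff; blast)+

lemma is_Q_fractions:
  assumes "is_Q t A Q \<iota>"
  shows "left_fractions A (S_Ore t A) Q \<iota> \<or> right_fractions A (S_Ore t A) Q \<iota>"
  using is_Q_D(5,6)[OF assms] by (cases t) auto

lemma is_Q_embedding:
  assumes A: "ring A" and Q: "is_Q t A Q \<iota>"
  shows "ring_embedding A Q \<iota>"
proof -
  have hom: "ring_hom_ring A Q \<iota>"
    by (rule ring_hom_ringI2[OF A is_Q_D(1)[OF Q] is_Q_D(2)[OF Q]])
  have "a_kernel A Q \<iota> = {\<zero>\<^bsub>A\<^esub>}"
  proof (intro equalityI subsetI)
    fix a assume "a \<in> a_kernel A Q \<iota>"
    then have a: "a \<in> carrier A" "\<iota> a = \<zero>\<^bsub>Q\<^esub>" by (simp_all add: a_kernel_def')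
    then obtain u where u: "u \<in> S_Ore t A" and zero: "u \<otimes>\<^bsub>A\<^esub> a = \<zero>\<^bsub>A\<^esub> \<or> a \<otimes>\<^bsub>A\<^esub> u = \<zero>\<^bsub>A\<^esub>"
      using is_Q_D(4)[OF Q] by blast
    from S_Ore_regular[OF u] a(1) have "u \<otimes>\<^bsub>A\<^esub> a = \<zero>\<^bsub>A\<^esub> \<Longrightarrow> a = \<zero>\<^bsub>A\<^esub>"
      and "a \<otimes>\<^bsub>A\<^esub> u = \<zero>\<^bsub>A\<^esub> \<Longrightarrow> a = \<zero>\<^bsub>A\<^esub>"
      unfolding regular_def by simp_all
    with zero show "a \<in> {\<zero>\<^bsub>A\<^esub>}" by auto
  next
    fix a assume "a \<in> {\<zero>\<^bsub>A\<^esub>}"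
    then show "a \<in> a_kernel A Q \<iota>"
      using ring_hom_zero[OF is_Q_D(2)[OF Q] A is_Q_D(1)[OF Q]] ring.ring_simprules(2)[OF A]
      by (simp add: a_kernel_def')
  qed
  then have "inj_on \<iota> (carrier A)" by (rule ring_hom_ring.trivial_ker_imp_inj[OF hom])
  then show ?thesis
    by (intro ring_embedding.intro ring_embedding_axioms.intro A is_Q_D(1,2)[OF Q])
qed

text \<open>For \<open>t = Two\<close> the ring \<open>Q\<close> is specified as a ring of left fractions; the right Ore
  condition of \<open>S(A)\<close> turns these into right fractions.\<close>

lemma is_Q_right_fractions:
  assumes A: "ring A" and Q: "is_Q t A Q \<iota>" and t: "t \<in> {Rgt, Two}"
  shows "right_fractions A (S_Ore t A) Q \<iota>"
proof (cases "t = Rgt")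
  case True
  then show ?thesis by (rule is_Q_D(6)[OF Q])
next
  case False
  with t have Two: "t = Two" by simp
  interpret ring_embedding A Q \<iota> by (rule is_Q_embedding[OF A Q])
  show ?thesis
  proof (rule right_fractions_if_left_fractions)
    show "S_Ore t A \<subseteq> carrier A" using S_Ore_carrier by auto
    show "\<iota> ` S_Ore t A \<subseteq> Units Q" by (rule is_Q_D(3)[OF Q])
    show "left_fractions A (S_Ore t A) Q \<iota>" using is_Q_D(5)[OF Q] Two by simp
    show "\<exists>w'\<in>S_Ore t A. \<exists>c'\<in>carrier A. c \<otimes>\<^bsub>A\<^esub> w' = w \<otimes>\<^bsub>A\<^esub> c'"
      if "c \<in> carrier A" "w \<in> S_Ore t A" for c w
      using S_Ore_Two_right_Ore that Two by simp
  qed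
qed

lemma is_Q_nontrivial:
  assumes A: "ring A" and Q: "is_Q t A Q \<iota>"
  shows "\<one>\<^bsub>Q\<^esub> \<noteq> \<zero>\<^bsub>Q\<^esub>"
proof -
  interpret ring_embedding A Q \<iota> by (rule is_Q_embedding[OF A Q])
  have "\<exists>u. u \<in> S_Ore t A"
    using is_Q_fractions[OF Q] Q.one_closed unfolding left_fractions_def right_fractions_def by blast
  then obtain T where "reg_Ore t A T" "T \<noteq> {}" by (auto simp: S_Ore_def)
  then have "\<one>\<^bsub>A\<^esub> \<noteq> \<zero>\<^bsub>A\<^esub>"
    using reg_Ore_imp_mult_set by (force simp: mult_set_def)
  then show ?thesis
    using inj_onD[OF inj, of "\<one>\<^bsub>A\<^esub>" "\<zero>\<^bsub>A\<^esub>"] by auto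
qed

theorem S_Ore_eq_Units_preimage:
  assumes A: "ring A" and Q: "is_Q t A Q \<iota>"
  shows "S_Ore t A = {a \<in> carrier A. \<iota> a \<in> Units Q}" and "reg_Ore t A (S_Ore t A)"
proof -
  interpret ring_embedding A Q \<iota> by (rule is_Q_embedding[OF A Q])
  let ?T = "{a \<in> carrier A. \<iota> a \<in> Units Q}"
  have T: "mult_set A ?T"
    by (rule mult_set_Units_preimage[OF is_Q_nontrivial[OF A Q]])
  have S_Ore_subset: "S_Ore t A \<subseteq> ?T"
  proof
    fix u assume "u \<in> S_Ore t A"
    then show "u \<in> ?T" using S_Ore_carrier[of u t A] is_Q_D(3)[OF Q] by auto
  qed
  have units: "\<iota> ` ?T \<subseteq> Units Q" by auto
  have "reg_Ore t A ?T"
    unfolding reg_Ore_iff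
    using reg_left_Ore_if_left_fractions[OF S_Ore_subset T units is_Q_D(5)[OF Q]]
      reg_right_Ore_if_right_fractions[OF S_Ore_subset T units is_Q_right_fractions[OF A Q]]
    by blast
  moreover have "?T \<subseteq> S_Ore t A" using calculation by (rule reg_Ore_subset_S_Ore)
  ultimately show "S_Ore t A = ?T" "reg_Ore t A (S_Ore t A)" using S_Ore_subset by auto
qed

lemma (in localization) ass_quotient_embedding:
  "ring_embedding (R Quot ass R S) L (\<lambda>X. the_elem (\<sigma> ` X))"
  unfolding ass_eq_kernel
proof (intro ring_embedding.intro ring_embedding_axioms.intro)
  show "inj_on (\<lambda>X. the_elem (\<sigma> ` X)) (carrier (R Quot a_kernel R L \<sigma>))"
    using \<sigma>.the_elem_inj by (auto simp: inj_on_def)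
qed (simp_all add: ideal.quotient_is_ring[OF \<sigma>.kernel_is_ideal] L.ring_axioms \<sigma>.the_elem_hom)

lemma (in localization) ass_quotient_lift:
  "r \<in> carrier R \<Longrightarrow> the_elem (\<sigma> ` (ass R S +>\<^bsub>R\<^esub> r)) = \<sigma> r"
  unfolding ass_eq_kernel by simp

lemma (in localization) left_fractions_mod_ass:
  assumes frac: "left_fractions R S L \<sigma>"
  shows "left_fractions (R Quot ass R S) ((+>\<^bsub>R\<^esub>) (ass R S) ` S) L (\<lambda>X. the_elem (\<sigma> ` X))"
  unfolding left_fractions_def
proof
  fix q assume "q \<in> carrier L"
  then obtain s r where s: "s \<in> S" and r: "r \<in> carrier R" and q: "q = inv\<^bsub>L\<^esub> (\<sigma> s) \<otimes>\<^bsub>L\<^esub> \<sigma> r"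
    using frac unfolding left_fractions_def by blast
  have "ass R S +>\<^bsub>R\<^esub> r \<in> carrier (R Quot ass R S)"
    using r by (auto simp: FactRing_def A_RCOSETS_def')
  then show "\<exists>w\<in>(+>\<^bsub>R\<^esub>) (ass R S) ` S. \<exists>c\<in>carrier (R Quot ass R S).
      q = inv\<^bsub>L\<^esub> (the_elem (\<sigma> ` w)) \<otimes>\<^bsub>L\<^esub> the_elem (\<sigma> ` c)"
    using q s r ass_quotient_lift S_carrier by (metis image_eqI)
qed

lemma (in localization) right_fractions_mod_ass:
  assumes frac: "right_fractions R S L \<sigma>"
  shows "right_fractions (R Quot ass R S) ((+>\<^bsub>R\<^esub>) (ass R S) ` S) L (\<lambda>X. the_elem (\<sigma> ` X))"
  unfolding right_fractions_def
proof
  fix q assume "q \<in> carrier L"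
  then obtain s r where s: "s \<in> S" and r: "r \<in> carrier R" and q: "q = \<sigma> r \<otimes>\<^bsub>L\<^esub> inv\<^bsub>L\<^esub> (\<sigma> s)"
    using frac unfolding right_fractions_def by blast
  have "ass R S +>\<^bsub>R\<^esub> r \<in> carrier (R Quot ass R S)"
    using r by (auto simp: FactRing_def A_RCOSETS_def')
  then show "\<exists>w\<in>(+>\<^bsub>R\<^esub>) (ass R S) ` S. \<exists>c\<in>carrier (R Quot ass R S).
      q = the_elem (\<sigma> ` c) \<otimes>\<^bsub>L\<^esub> inv\<^bsub>L\<^esub> (the_elem (\<sigma> ` w))"
    using q s r ass_quotient_lift S_carrier by (metis image_eqI)
qed

theorem reg_Ore_image_if_localizable:
  assumes R: "ring R" and S: "localizable t R S"
  shows "reg_Ore t (R Quot ass R S) ((+>\<^bsub>R\<^esub>) (ass R S) ` S)"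
proof -
  have S_mult: "mult_set R S" by (rule localizable_imp_mult_set[OF S])
  interpret localization R S
    using R S_mult by (intro localization.intro localization_axioms.intro) (auto simp: mult_set_def)
  interpret \<aa>: ideal "ass R S" R
    using \<sigma>.kernel_is_ideal by (simp add: ass_eq_kernel)
  interpret \<pi>: ring_hom_ring R "R Quot ass R S" "(+>\<^bsub>R\<^esub>) (ass R S)"
    by (rule \<aa>.rcos_ring_hom_ring)
  interpret E: ring_embedding "R Quot ass R S" L "\<lambda>X. the_elem (\<sigma> ` X)"
    by (rule ass_quotient_embedding)
  have units: "(\<lambda>X. the_elem (\<sigma> ` X)) ` (+>\<^bsub>R\<^esub>) (ass R S) ` S \<subseteq> Units L"
  proof
    fix x assume "x \<in> (\<lambda>X. the_elem (\<sigma> ` X)) ` (+>\<^bsub>R\<^esub>) (ass R S) ` S"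
    then obtain s where "s \<in> S" "x = the_elem (\<sigma> ` (ass R S +>\<^bsub>R\<^esub> s))" by blast
    then show "x \<in> Units L" using ass_quotient_lift[OF S_carrier] loc_map_Units by simp
  qed
  have "ass R S +>\<^bsub>R\<^esub> s \<noteq> \<zero>\<^bsub>R Quot ass R S\<^esub>" if s: "s \<in> S" for s
  proof
    assume "ass R S +>\<^bsub>R\<^esub> s = \<zero>\<^bsub>R Quot ass R S\<^esub>"
    then have "s \<in> ass R S" using \<aa>.rcos_eq_zero_iff S_carrier[OF s] by blast
    then have "\<sigma> s = \<zero>\<^bsub>L\<^esub>" by (simp only: ass_def mem_Collect_eq)
    then show False
      using loc_map_loc_var[OF s] loc_var_closed[OF s] localizable_imp_nontrivial[OF S] by simp
  qed
  then have mult: "mult_set (R Quot ass R S) ((+>\<^bsub>R\<^esub>) (ass R S) ` S)"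
    by (rule \<pi>.mult_set_image[OF S_mult])
  show ?thesis
    using S E.reg_left_Ore_if_left_fractions[OF order.refl mult units left_fractions_mod_ass]
      E.reg_right_Ore_if_right_fractions[OF order.refl mult units right_fractions_mod_ass]
    unfolding reg_Ore_iff localizable_iff left_localizable_iff right_localizable_iff by blast
qed

section \<open>The largest localizable set with a given kernel\<close>

locale Q_ass_setting =
  fixes R :: "('a, 'm) ring_scheme" and t :: side and \<aa> :: "'a set"
    and Q :: "('q, 'n) ring_scheme" and \<iota> :: "'a set \<Rightarrow> 'q" and S0 :: "'a set"
  assumes R: "ring R" and S0_localizable: "localizable t R S0" and ass_S0: "ass R S0 = \<aa>"
    and is_Q: "is_Q t (R Quot \<aa>) Q \<iota>"
begin

abbreviation "A \<equiv> R Quot \<aa>"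
abbreviation "\<pi> \<equiv> (+>\<^bsub>R\<^esub>) \<aa>"

definition T :: "'a set" where
  "T = {r \<in> carrier R. \<pi> r \<in> S_Ore t A}"

sublocale R: ring R by (rule R)

sublocale \<aa>: ideal \<aa> R
proof -
  interpret localization R S0
    using R localizable_imp_mult_set[OF S0_localizable]
    by (intro localization.intro localization_axioms.intro) (auto simp: mult_set_def)
  show "ideal \<aa> R" using \<sigma>.kernel_is_ideal ass_S0 by (simp add: ass_eq_kernel)
qed

sublocale \<pi>: ring_hom_ring R A \<pi>
  by (rule \<aa>.rcos_ring_hom_ring)

sublocale \<iota>: ring_embedding A Q \<iota>
  by (rule is_Q_embedding[OF \<aa>.quotient_is_ring is_Q])

lemma S_Ore_A: "S_Ore t A = {a \<in> carrier A. \<iota> a \<in> Units Q}" "reg_Ore t A (S_Ore t A)"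
  using S_Ore_eq_Units_preimage[OF \<aa>.quotient_is_ring is_Q] by auto

lemma T_iff: "r \<in> T \<longleftrightarrow> r \<in> carrier R \<and> \<iota> (\<pi> r) \<in> Units Q"
  unfolding T_def S_Ore_A(1) by auto

lemma S_Ore_lift: "w \<in> S_Ore t A \<Longrightarrow> \<exists>s\<in>T. w = \<pi> s"
  using S_Ore_carrier \<aa>.FactRing_carrier unfolding T_def by fastforce

lemma \<iota>_\<pi>_hom: "ring_hom_ring R Q (\<lambda>r. \<iota> (\<pi> r))"
proof -
  have "\<iota> \<circ> \<pi> \<in> ring_hom R Q" by (rule ring_hom_trans[OF \<pi>.homh \<iota>.hom])
  then show ?thesis by (intro ring_hom_ringI2[OF R \<iota>.Q.ring_axioms]) (simp add: comp_def)
qed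

lemma T_mult_set: "mult_set R T"
proof -
  have "T = {r \<in> carrier R. \<iota> (\<pi> r) \<in> Units Q}" using T_iff by blast
  then show ?thesis
    using ring_hom_ring.mult_set_Units_preimage[OF \<iota>_\<pi>_hom is_Q_nontrivial[OF \<aa>.quotient_is_ring is_Q]]
    by simp
qed

lemma L_ass_subset_T:
  assumes "S \<in> L_ass t R \<aa>"
  shows "S \<subseteq> T"
proof -
  have S: "localizable t R S" "ass R S = \<aa>" using assms by (auto simp: L_ass_def)
  have "\<pi> ` S \<subseteq> S_Ore t A"
    using reg_Ore_subset_S_Ore[OF reg_Ore_image_if_localizable[OF R S(1)]] S(2) by simp
  moreover have "S \<subseteq> carrier R" using localizable_imp_mult_set[OF S(1)] by (simp add: mult_set_def)
  ultimately show ?thesis unfolding T_def by blast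
qed

sublocale l: localization R T
  using R T_mult_set by (intro localization.intro localization_axioms.intro) (auto simp: mult_set_def)

definition \<phi> :: "(('a + 'a) list \<Rightarrow> int) set \<Rightarrow> 'q" where
  "\<phi> = (SOME \<phi>. \<phi> \<in> ring_hom (loc R T) Q \<and> (\<forall>r\<in>carrier R. \<phi> (loc_map R T r) = \<iota> (\<pi> r)))"

lemma \<phi>_hom: "\<phi> \<in> ring_hom (loc R T) Q" and \<phi>_loc_map: "r \<in> carrier R \<Longrightarrow> \<phi> (loc_map R T r) = \<iota> (\<pi> r)"
proof -
  have "\<exists>\<phi>. \<phi> \<in> ring_hom (loc R T) Q \<and> (\<forall>r\<in>carrier R. \<phi> (loc_map R T r) = \<iota> (\<pi> r))"
    by (rule l.loc_lift[OF \<iota>_\<pi>_hom]) (simp add: T_iff)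
  then have "\<phi> \<in> ring_hom (loc R T) Q \<and> (\<forall>r\<in>carrier R. \<phi> (loc_map R T r) = \<iota> (\<pi> r))"
    unfolding \<phi>_def by (rule someI_ex)
  then show "\<phi> \<in> ring_hom (loc R T) Q" "r \<in> carrier R \<Longrightarrow> \<phi> (loc_map R T r) = \<iota> (\<pi> r)" by auto
qed

sublocale \<phi>: ring_hom_ring "loc R T" Q \<phi>
  by (rule ring_hom_ringI2[OF l.L.ring_axioms \<iota>.Q.ring_axioms \<phi>_hom])

lemma mem_\<aa>_if_\<iota>_\<pi>_zero:
  assumes "r \<in> carrier R" "\<iota> (\<pi> r) = \<zero>\<^bsub>Q\<^esub>"
  shows "r \<in> \<aa>"
proof -
  have "\<iota> (\<pi> r) = \<iota> \<zero>\<^bsub>A\<^esub>" using assms(2) by simp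
  then have "\<pi> r = \<zero>\<^bsub>A\<^esub>"
    using inj_onD[OF \<iota>.inj] \<pi>.hom_closed[OF assms(1)] \<pi>.S.zero_closed by blast
  then show ?thesis using \<aa>.rcos_eq_zero_iff assms(1) by blast
qed

lemma ass_T: "ass R T = \<aa>"
proof
  show "ass R T \<subseteq> \<aa>"
  proof
    fix r assume "r \<in> ass R T"
    then have r: "r \<in> carrier R" "loc_map R T r = \<zero>\<^bsub>loc R T\<^esub>" by (auto simp: ass_def)
    have "\<iota> (\<pi> r) = \<phi> (loc_map R T r)" using \<phi>_loc_map[OF r(1)] by simp
    also have "\<dots> = \<zero>\<^bsub>Q\<^esub>" using r(2) by simp
    finally show "r \<in> \<aa>" by (rule mem_\<aa>_if_\<iota>_\<pi>_zero[OF r(1)])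
  qed
  have "S0 \<subseteq> T" using L_ass_subset_T S0_localizable ass_S0 by (simp add: L_ass_def)
  then show "\<aa> \<subseteq> ass R T"
    using ass_mono[OF R] T_mult_set ass_S0 by (auto simp: mult_set_def)
qed

lemma loc_map_eq_if_\<pi>_eq:
  assumes "x \<in> carrier R" "y \<in> carrier R" "\<pi> x = \<pi> y"
  shows "loc_map R T x = loc_map R T y"
proof -
  have ker: "\<aa> \<subseteq> a_kernel R (loc R T) (loc_map R T)"
    using ass_T l.ass_eq_kernel by simp
  show ?thesis
    using l.\<sigma>.FactRing_lift(2)[OF \<aa>.ideal_axioms ker] assms by metis
qed

lemma left_Ore_mod_ass:
  assumes Ore: "reg_left_Ore A (S_Ore t A)" and x: "x \<in> carrier R" and s: "s \<in> T"
  shows "\<exists>s'\<in>T. \<exists>r'\<in>carrier R. loc_map R T (s' \<otimes>\<^bsub>R\<^esub> x) = loc_map R T (r' \<otimes>\<^bsub>R\<^esub> s)"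
proof -
  have "\<pi> s \<in> S_Ore t A" "\<pi> x \<in> carrier A" using s x by (auto simp: T_def)
  then obtain w a where w: "w \<in> S_Ore t A" and a: "a \<in> carrier A"
    and eq: "w \<otimes>\<^bsub>A\<^esub> \<pi> x = a \<otimes>\<^bsub>A\<^esub> \<pi> s"
    using Ore unfolding reg_left_Ore_def by blast
  obtain s' where s': "s' \<in> T" "w = \<pi> s'" using S_Ore_lift[OF w] by blast
  obtain r' where r': "r' \<in> carrier R" "a = \<pi> r'" using a \<aa>.FactRing_carrier by blast
  have sR: "s \<in> carrier R" "s' \<in> carrier R" using s s'(1) by (auto simp: T_def)
  have "\<pi> (s' \<otimes>\<^bsub>R\<^esub> x) = \<pi> (r' \<otimes>\<^bsub>R\<^esub> s)" using eq s' r' sR x by simp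
  then show ?thesis
    using loc_map_eq_if_\<pi>_eq sR x r' s'(1) by (meson R.m_closed)
qed

lemma right_Ore_mod_ass:
  assumes Ore: "reg_right_Ore A (S_Ore t A)" and x: "x \<in> carrier R" and s: "s \<in> T"
  shows "\<exists>s'\<in>T. \<exists>r'\<in>carrier R. loc_map R T (x \<otimes>\<^bsub>R\<^esub> s') = loc_map R T (s \<otimes>\<^bsub>R\<^esub> r')"
proof -
  have "\<pi> s \<in> S_Ore t A" "\<pi> x \<in> carrier A" using s x by (auto simp: T_def)
  then obtain w a where w: "w \<in> S_Ore t A" and a: "a \<in> carrier A"
    and eq: "\<pi> x \<otimes>\<^bsub>A\<^esub> w = \<pi> s \<otimes>\<^bsub>A\<^esub> a"
    using Ore unfolding reg_right_Ore_def by blast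
  obtain s' where s': "s' \<in> T" "w = \<pi> s'" using S_Ore_lift[OF w] by blast
  obtain r' where r': "r' \<in> carrier R" "a = \<pi> r'" using a \<aa>.FactRing_carrier by blast
  have sR: "s \<in> carrier R" "s' \<in> carrier R" using s s'(1) by (auto simp: T_def)
  have "\<pi> (x \<otimes>\<^bsub>R\<^esub> s') = \<pi> (s \<otimes>\<^bsub>R\<^esub> r')" using eq s' r' sR x by simp
  then show ?thesis
    using loc_map_eq_if_\<pi>_eq sR x r' s'(1) by (meson R.m_closed)
qed

lemma loc_nontrivial: "\<one>\<^bsub>loc R T\<^esub> \<noteq> \<zero>\<^bsub>loc R T\<^esub>"
proof
  assume "\<one>\<^bsub>loc R T\<^esub> = \<zero>\<^bsub>loc R T\<^esub>"
  then have "\<phi> \<one>\<^bsub>loc R T\<^esub> = \<phi> \<zero>\<^bsub>loc R T\<^esub>" by simp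
  then show False using is_Q_nontrivial[OF \<aa>.quotient_is_ring is_Q] by simp
qed

lemma T_localizable: "localizable t R T"
  using S_Ore_A(2) T_mult_set loc_nontrivial
    l.left_fractions_if_Ore[OF T_mult_set left_Ore_mod_ass]
    l.right_fractions_if_Ore[OF T_mult_set right_Ore_mod_ass]
  unfolding localizable_iff reg_Ore_iff l.left_localizable_iff l.right_localizable_iff
  by blast

lemma T_ass_eq: "T_ass t R \<aa> = T"
proof
  show "T_ass t R \<aa> \<subseteq> T" using L_ass_subset_T by (auto simp: T_ass_def)
  have "T \<in> L_ass t R \<aa>" using T_localizable ass_T by (simp add: L_ass_def)
  then show "T \<subseteq> T_ass t R \<aa>" by (auto simp: T_ass_def)
qed

lemma S_Ore_fraction_lift:
  assumes "w \<in> S_Ore t A" "c \<in> carrier A"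
  obtains s r where "s \<in> T" "r \<in> carrier R" "\<iota> w = \<phi> (loc_map R T s)" "\<iota> c = \<phi> (loc_map R T r)"
  using S_Ore_lift[OF assms(1)] assms(2) \<aa>.FactRing_carrier \<phi>_loc_map T_iff by (metis imageE)

lemma loc_fractions:
  "left_fractions R T (loc R T) (loc_map R T) \<or> right_fractions R T (loc R T) (loc_map R T)"
  using T_localizable
  unfolding localizable_iff l.left_localizable_iff l.right_localizable_iff by (cases t) auto

lemma Q_fractions:
  "left_fractions R T Q (\<lambda>r. \<phi> (loc_map R T r)) \<or> right_fractions R T Q (\<lambda>r. \<phi> (loc_map R T r))"
proof -
  have "left_fractions R T Q (\<lambda>r. \<phi> (loc_map R T r))" if "left_fractions A (S_Ore t A) Q \<iota>"
    using that S_Ore_fraction_lift unfolding left_fractions_def by metis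
  moreover have "right_fractions R T Q (\<lambda>r. \<phi> (loc_map R T r))" if "right_fractions A (S_Ore t A) Q \<iota>"
    using that S_Ore_fraction_lift unfolding right_fractions_def by metis
  ultimately show ?thesis using is_Q_fractions[OF is_Q] by blast
qed

lemma \<phi>_iso: "\<phi> \<in> ring_iso (loc R T) Q"
proof -
  have "loc_map R T r = \<zero>\<^bsub>loc R T\<^esub>" if "r \<in> carrier R" "\<phi> (loc_map R T r) = \<zero>\<^bsub>Q\<^esub>" for r
    using mem_\<aa>_if_\<iota>_\<pi>_zero[of r] that \<phi>_loc_map ass_T by (auto simp: ass_def)
  then have "inj_on \<phi> (carrier (loc R T))"
    using l.loc_hom_inj[OF \<phi>.ring_hom_ring_axioms loc_fractions] by blast
  moreover have "\<phi> ` carrier (loc R T) = carrier Q"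
    by (rule l.loc_hom_surj[OF \<phi>.ring_hom_ring_axioms Q_fractions])
  ultimately show ?thesis
    using \<phi>_hom by (simp add: ring_iso_def bij_betw_def)
qed

lemma T_eq_loc_Units_preimage: "T = {r \<in> carrier R. loc_map R T r \<in> Units (loc R T)}"
proof -
  have "\<phi> (loc_map R T r) \<in> Units Q \<longleftrightarrow> loc_map R T r \<in> Units (loc R T)" if "r \<in> carrier R" for r
    using \<phi>.hom_Units_iff \<phi>_iso that by (simp add: ring_iso_def)
  then show ?thesis using T_iff \<phi>_loc_map by auto
qed

end

theorem theorem2p8:
  fixes R :: "('a, 'm) ring_scheme" and t :: side and \<aa> :: "'a set"
    and Q :: "('q, 'n) ring_scheme" and \<iota> :: "'a set \<Rightarrow> 'q"
  assumes "ring R"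
    and "\<aa> \<in> ass_L t R"
    and "is_Q t (R Quot \<aa>) Q \<iota>"
  shows "T_ass t R \<aa> = {r \<in> carrier R. \<aa> +>\<^bsub>R\<^esub> r \<in> S_Ore t (R Quot \<aa>)} \<and>
         (\<exists>\<phi>. \<phi> \<in> ring_iso (Q_ass t R \<aa>) Q \<and>
           (\<forall>r\<in>carrier R. \<phi> (loc_map R (T_ass t R \<aa>) r) = \<iota> (\<aa> +>\<^bsub>R\<^esub> r))) \<and>
         T_ass t R \<aa> = {r \<in> carrier R. loc_map R (T_ass t R \<aa>) r \<in> Units (Q_ass t R \<aa>)} \<and>
         T_ass t R \<aa> = {r \<in> carrier R. \<iota> (\<aa> +>\<^bsub>R\<^esub> r) \<in> Units Q}"
proof -
  obtain S0 where "localizable t R S0" "ass R S0 = \<aa>"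
    using assms(2) unfolding ass_L_def by blast
  then interpret Q_ass_setting R t \<aa> Q \<iota> S0
    using assms by (simp add: Q_ass_setting_def)
  have "Q_ass t R \<aa> = loc R T" by (simp add: Q_ass_def T_ass_eq)
  then show ?thesis
    using T_ass_eq \<phi>_iso \<phi>_loc_map T_iff T_eq_loc_Units_preimage by (auto simp: T_def)
qed

end
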